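(* Let $G$ be a connected simple undirected graph with adjacency matrix $A$, let $\tau>\tau_c^{(1)}(G)$ (so $R_0(G,\tau)=\tau\lambda_1(A)>1$), let $y_\infty(G)>0$ be the endemic steady-state prevalence, and let $0<r<y_\infty(G)$. Then the NIMFA SIS process started at $V(0)=ru$ satisfies $|y(t)-y_\infty(G)|>r$ for all $0\le t<\frac{1}{R_0(G,\tau)-1}\log\left(\frac{y_\infty(G)-r}{r}\right)$. Consequently the upper-transition time satisfies $$\overline{T}(r)\ge \frac{1}{R_0(G,\tau)-1}\log\left(\frac{y_\infty(G)-r}{r}\right).$$
   Context: NIMFA SIS process (time rescaled so that the curing rate is $1$): for a simple undirected graph with $N\times N$ symmetric $0/1$ adjacency matrix $A$ (zero diagonal) and effective infection rate $\tau>0$, the infection probabilities $v_i(t)\in[0,1]$ evolve by $\frac{dv_i}{dt} = -v_i + \tau(1-v_i)\sum_{j=1}^N a_{ij}v_j$, $i=1,\dots,N$, with initial condition $V(0)\in[0,1]^N$. The prevalence is $y(t)=\frac1N\sum_i v_i(t)$; $u$ is the all-one vector. $\lambda_1(A)$ is the largest eigenvalue of $A$, $\tau_c^{(1)}(G)=1/\lambda_1(A)$, $R_0(G,\tau)=\tau\lambda_1(A)$. For a connected graph and $\tau>\tau_c^{(1)}(G)$ the system has a unique equilibrium $V_\infty$ with positive entries, attracting every $V(0)\ne 0$; $y_\infty(G)$ is its prevalence. The upper-transition time is $\overline{T}(r)=\min\{t\ge 0: |y(t)-y_\infty|\le r \text{ for all } V(0) \text{ with } v_i(0)\in[r,1]\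 \forall i\}$. *)

theory Defs
  imports Complex_Main
begin

definition adjacency_matrix :: "('n::finite \<Rightarrow> 'n \<Rightarrow> real) \<Rightarrow> bool" where
  "adjacency_matrix A \<longleftrightarrow>
     (\<forall>i j. A i j = 0 \<or> A i j = 1) \<and> (\<forall>i j. A i j = A j i) \<and> (\<forall>i. A i i = 0)"

definition connected_graph :: "('n::finite \<Rightarrow> 'n \<Rightarrow> real) \<Rightarrow> bool" where
  "connected_graph A \<longleftrightarrow> (\<forall>i j. (\<lambda>x y. A x y = 1)\<^sup>*\<^sup>* i j)"

definition is_eigenvalue :: "('n::finite \<Rightarrow> 'n \<Rightarrow> real) \<Rightarrow> real \<Rightarrow> bool" where
  "is_eigenvalue A l \<longleftrightarrow> (\<exists>v::'n \<Rightarrow> real. v \<noteq> (\<lambda>_. 0) \<and> (\<forall>i. (\<Sum>j\<in>UNIV. A i j * v j) = l * v i))"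

text \<open>Largest eigenvalue (A symmetric, so all eigenvalues are real).\<close>
definition lambda1 :: "('n::finite \<Rightarrow> 'n \<Rightarrow> real) \<Rightarrow> real" where
  "lambda1 A = Max {l. is_eigenvalue A l}"

definition R0 :: "('n::finite \<Rightarrow> 'n \<Rightarrow> real) \<Rightarrow> real \<Rightarrow> real" where
  "R0 A \<tau> = \<tau> * lambda1 A"

definition nimfa_rhs :: "('n::finite \<Rightarrow> 'n \<Rightarrow> real) \<Rightarrow> real \<Rightarrow> ('n \<Rightarrow> real) \<Rightarrow> 'n \<Rightarrow> real" where
  "nimfa_rhs A \<tau> v i = - v i + \<tau> * (1 - v i) * (\<Sum>j\<in>UNIV. A i j * v j)"

definition nimfa_solution :: "('n::finite \<Rightarrow> 'n \<Rightarrow> real) \<Rightarrow> real \<Rightarrow> (real \<Rightarrow> 'n \<Rightarrow> real) \<Rightarrow> bool" where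
  "nimfa_solution A \<tau> V \<longleftrightarrow>
     (\<forall>t\<ge>0. \<forall>i. ((\<lambda>s. V s i) has_real_derivative nimfa_rhs A \<tau> (V t) i) (at t within {0..}))"

definition prevalence :: "('n::finite \<Rightarrow> real) \<Rightarrow> real" where
  "prevalence v = (\<Sum>i\<in>UNIV. v i) / real (card (UNIV :: 'n set))"

definition endemic_equilibrium :: "('n::finite \<Rightarrow> 'n \<Rightarrow> real) \<Rightarrow> real \<Rightarrow> 'n \<Rightarrow> real" where
  "endemic_equilibrium A \<tau> = (THE v. (\<forall>i. 0 < v i \<and> v i \<le> 1) \<and> (\<forall>i. nimfa_rhs A \<tau> v i = 0))"

definition y_inf :: "('n::finite \<Rightarrow> 'n \<Rightarrow> real) \<Rightarrow> real \<Rightarrow> real" where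
  "y_inf A \<tau> = prevalence (endemic_equilibrium A \<tau>)"

definition upper_transition_time :: "('n::finite \<Rightarrow> 'n \<Rightarrow> real) \<Rightarrow> real \<Rightarrow> real \<Rightarrow> real" where
  "upper_transition_time A \<tau> r = Inf {t. t \<ge> 0 \<and>
     (\<forall>V. nimfa_solution A \<tau> V \<and> (\<forall>i. r \<le> V 0 i \<and> V 0 i \<le> 1) \<longrightarrow>
          \<bar>prevalence (V t) - y_inf A \<tau>\<bar> \<le> r)}"

end

theory Submission
  imports Defs "HOL-Analysis.Analysis"
begin

text \<open>Below the claimed time the prevalence is still small: along a solution started at \<open>r u\<close>
  one has \<open>(\<parallel>V\<parallel>\<^sup>2)' = 2 \<Sum>\<^sub>i v\<^sub>i f\<^sub>i(V) \<le> 2 (\<tau> V\<^sup>T A V - \<parallel>V\<parallel>\<^sup>2) \<le> 2 (R\<^sub>0 - 1) \<parallel>V\<parallel>\<^sup>2\<close> by the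
  Rayleigh bound for \<open>\<lambda>\<^sub>1\<close>, so by Cauchy-Schwarz \<open>y(t) \<le> r e\<^sup>(\<^sup>R\<^sup>0\<^sup>-\<^sup>1\<^sup>)\<^sup>t\<close>, which is below
  \<open>y\<^sub>\<infinity> - r\<close> before that time. The bound on the transition time additionally needs a solution
  from \<open>r u\<close> (Picard iteration for the field clamped to the invariant cube \<open>[0,1]\<^sup>N\<close>) and
  the existence of some time at which every solution from \<open>[r,1]\<^sup>N\<close> is \<open>r\<close>-close to
  \<open>y\<^sub>\<infinity>\<close>. For the latter, the system is cooperative, so such solutions lie between the
  solution from a small multiple of the Perron vector, which increases, and the one from \<open>u\<close>,
  which decreases; both converge to positive equilibria, and the positive equilibrium is unique.\<close>

lemma has_real_derivative_within_atLeast_at: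
  fixes f :: "real \<Rightarrow> real"
  assumes "(f has_real_derivative D) (at t within {0..})" "t > 0"
  shows "(f has_real_derivative D) (at t)"
proof -
  have "t \<in> interior {0::real..}" using assms(2) by simp
  then have "at t within {0..} = at t" by (rule at_within_interior)
  with assms(1) show ?thesis by simp
qed

lemma continuous_on_if_has_real_derivative_within_atLeast:
  fixes f :: "real \<Rightarrow> real"
  assumes "\<And>s. 0 \<le> s \<Longrightarrow> (f has_real_derivative d s) (at s within {0..})"
  shows "continuous_on {0..T} f"
proof -
  have "continuous (at s within {0..T}) f" if "s \<in> {0..T}" for s
  proof -
    have "continuous (at s within {0..}) f" using assms[of s] that by (intro DERIV_continuous) auto
    then show ?thesis by (rule continuous_within_subset) auto
  qed
  then show ?thesis by (simp add: continuous_on_eq_continuous_within)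
qed

lemma gronwall_nonpos:
  fixes \<phi> d :: "real \<Rightarrow> real" and C T :: real
  assumes der: "\<And>t. 0 \<le> t \<Longrightarrow> t \<le> T \<Longrightarrow> (\<phi> has_real_derivative d t) (at t within {0..})"
    and le: "\<And>t. 0 \<le> t \<Longrightarrow> t \<le> T \<Longrightarrow> d t \<le> C * \<phi> t"
    and init: "\<phi> 0 \<le> 0"
    and t: "0 \<le> t" "t \<le> T"
  shows "\<phi> t \<le> 0"
proof -
  define \<psi> where "\<psi> s = \<phi> s * exp (- C * s)" for s
  have d\<psi>: "(\<psi> has_real_derivative (d s * exp (- C * s) + \<phi> s * (exp (- C * s) * (- C))))
      (at s within {0..})" if "0 \<le> s" "s \<le> T" for s
  proof -
    have "((\<lambda>s. exp (- C * s)) has_real_derivative exp (- C * s) * (- C)) (at s within {0..})"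
      by (auto intro!: derivative_eq_intros)
    from DERIV_mult[OF der[OF that] this] show ?thesis unfolding \<psi>_def by (simp add: algebra_simps)
  qed
  have "\<psi> t \<le> \<psi> 0"
  proof (rule DERIV_nonpos_imp_decreasing_open[OF t(1)])
    fix x assume x: "0 < x" "x < t"
    show "\<exists>y. DERIV \<psi> x :> y \<and> y \<le> 0"
    proof (intro exI conjI)
      show "DERIV \<psi> x :> (d x * exp (- C * x) + \<phi> x * (exp (- C * x) * (- C)))"
        using d\<psi>[of x] x t by (intro has_real_derivative_within_atLeast_at) auto
      have "d x * exp (- C * x) \<le> C * \<phi> x * exp (- C * x)"
        using le[of x] x t by (intro mult_right_mono) auto
      then show "d x * exp (- C * x) + \<phi> x * (exp (- C * x) * (- C)) \<le> 0"
        by (simp add: algebra_simps)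
    qed
  next
    have "continuous (at s within {0..t}) \<psi>" if "s \<in> {0..t}" for s
    proof -
      have "continuous (at s within {0..}) \<psi>"
        using d\<psi>[of s] that t by (intro DERIV_continuous) auto
      then show ?thesis by (rule continuous_within_subset) auto
    qed
    then show "continuous_on {0..t} \<psi>" by (simp add: continuous_on_eq_continuous_within)
  qed
  then have "\<phi> t * exp (- C * t) \<le> 0" using init unfolding \<psi>_def by simp
  then show ?thesis by (simp add: mult_le_0_iff)
qed

lemma DERIV_max_zero_square_at:
  "((\<lambda>x::real. (max x 0)\<^sup>2) has_real_derivative 2 * max x 0) (at x)"
proof (cases x "0::real" rule: linorder_cases)
  case less
  have "((\<lambda>x::real. 0) has_real_derivative 2 * max x 0) (at x)" using less by simp
  then show ?thesis
    by (rule has_field_derivative_transform_within_open[where S="{..<0}"]) (use less in auto)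
next
  case equal
  have "((\<lambda>y. max y 0) \<longlongrightarrow> max 0 (0::real)) (at (0::real))" by (intro tendsto_intros)
  moreover have "\<forall>\<^sub>F y in at (0::real). max y 0 = (max y 0 ^ 2 - max 0 0 ^ 2) / (y - 0)"
    by (auto simp: eventually_at_filter max_def power2_eq_square)
  ultimately have "((\<lambda>y. (max y 0 ^ 2 - max 0 0 ^ 2) / (y - 0)) \<longlongrightarrow> (0::real)) (at (0::real))"
    by (auto intro: Lim_transform_eventually)
  then show ?thesis unfolding equal has_field_derivative_iff by simp
next
  case greater
  have "((\<lambda>x::real. x\<^sup>2) has_real_derivative 2 * max x 0) (at x)"
    using greater by (auto intro!: derivative_eq_intros)
  then show ?thesis
    by (rule has_field_derivative_transform_within_open[where S="{0<..}"]) (use greater in auto)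
qed

lemma DERIV_max_zero_square:
  fixes h :: "real \<Rightarrow> real"
  assumes "(h has_real_derivative d) (at t within S)"
  shows "((\<lambda>s. (max (h s) 0)\<^sup>2) has_real_derivative 2 * max (h t) 0 * d) (at t within S)"
  using DERIV_chain2[OF DERIV_max_zero_square_at assms] .

lemma has_integral_monomial:
  fixes t c :: real
  assumes "0 \<le> t"
  shows "((\<lambda>s. c * s ^ n) has_integral c * t ^ Suc n / Suc n) {0..t}"
proof -
  have "((\<lambda>s. c * s ^ Suc n / Suc n) has_real_derivative c * x ^ n) (at x within S)" for x S
  proof -
    have "((\<lambda>s. c * s ^ Suc n / Suc n) has_real_derivative c * (Suc n * x ^ n) / Suc n) (at x within S)"
      by (intro derivative_eq_intros DERIV_pow) auto
    then show ?thesis by (simp del: of_nat_Suc)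
  qed
  then have "((\<lambda>s. c * s ^ n) has_integral (c * t ^ Suc n / Suc n - c * 0 ^ Suc n / Suc n)) {0..t}"
    by (intro fundamental_theorem_of_calculus[OF assms])
       (auto simp: has_real_derivative_iff_has_vector_derivative[symmetric] simp del: of_nat_Suc)
  then show ?thesis by simp
qed

lemma sum_squares_nonpos_imp_zero:
  fixes f :: "'n::finite \<Rightarrow> real"
  assumes "(\<Sum>i\<in>UNIV. (f i)\<^sup>2) \<le> 0"
  shows "f i = 0"
proof -
  have "(f i)\<^sup>2 \<le> (\<Sum>i\<in>UNIV. (f i)\<^sup>2)" by (rule member_le_sum) auto
  with assms have "(f i)\<^sup>2 \<le> 0" by linarith
  then show ?thesis by simp
qed

lemma sum_abs_squared_le:
  fixes f :: "'n::finite \<Rightarrow> real"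
  shows "(\<Sum>i\<in>UNIV. \<bar>f i\<bar>)\<^sup>2 \<le> real CARD('n) * (\<Sum>i\<in>UNIV. (f i)\<^sup>2)"
  using sum_squared_le_sum_of_squares[of "\<lambda>i. \<bar>f i\<bar>" UNIV] by (simp add: mult.commute)

lemma bounded_mono_tendsto_at_top:
  fixes f :: "real \<Rightarrow> real"
  assumes mono: "\<And>s t. 0 \<le> s \<Longrightarrow> s \<le> t \<Longrightarrow> f s \<le> f t" and bdd: "\<And>t. 0 \<le> t \<Longrightarrow> f t \<le> B"
  obtains l where "(f \<longlongrightarrow> l) at_top"
proof -
  have "incseq (\<lambda>n. f (real n))" using mono by (auto simp: incseq_def)
  then obtain l where l: "(\<lambda>n. f (real n)) \<longlonglongrightarrow> l" and le: "\<forall>n. f (real n) \<le> l"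
    using incseq_convergent[of "\<lambda>n. f (real n)" B] bdd by auto
  have "(f \<longlongrightarrow> l) at_top"
  proof (rule order_tendstoI)
    fix a assume "a < l"
    then obtain n where n: "a < f (real n)"
      using order_tendstoD(1)[OF l] by (auto simp: eventually_sequentially)
    show "\<forall>\<^sub>F t in at_top. a < f t"
      unfolding eventually_at_top_linorder
    proof (intro exI allI impI)
      fix t assume "real n \<le> t"
      then show "a < f t" using mono[of "real n" t] n by simp
    qed
  next
    fix b assume "l < b"
    have le_l: "f t \<le> l" if "0 \<le> t" for t
      using mono[OF that real_nat_ceiling_ge[of t]] le[rule_format, of "nat \<lceil>t\<rceil>"] by simp
    show "\<forall>\<^sub>F t in at_top. f t < b"
      using eventually_ge_at_top[of "0::real"] by eventually_elim (use le_l \<open>l < b\<close> in fastforce)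
  qed
  then show thesis by (rule that)
qed

lemma bounded_antimono_tendsto_at_top:
  fixes f :: "real \<Rightarrow> real"
  assumes antimono: "\<And>s t. 0 \<le> s \<Longrightarrow> s \<le> t \<Longrightarrow> f t \<le> f s" and bdd: "\<And>t. 0 \<le> t \<Longrightarrow> B \<le> f t"
  obtains l where "(f \<longlongrightarrow> l) at_top"
proof -
  obtain l where "((\<lambda>t. - f t) \<longlongrightarrow> l) at_top"
    by (rule bounded_mono_tendsto_at_top[of "\<lambda>t. - f t" "- B"]) (use antimono bdd in auto)
  from tendsto_minus[OF this] show thesis by (intro that) simp
qed

lemma adjacency_matrixD:
  assumes "adjacency_matrix A"
  shows "0 \<le> A i j" "A i j \<le> 1" "A i j = A j i"
  using assms unfolding adjacency_matrix_def by (metis order.refl zero_le_one)+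

lemma adjacency_row_sum_bounds:
  fixes A :: "'n::finite \<Rightarrow> 'n \<Rightarrow> real"
  assumes "adjacency_matrix A" "\<And>j. 0 \<le> v j" "\<And>j. v j \<le> 1"
  shows "0 \<le> (\<Sum>j\<in>UNIV. A i j * v j)" "(\<Sum>j\<in>UNIV. A i j * v j) \<le> real CARD('n)"
proof -
  show "0 \<le> (\<Sum>j\<in>UNIV. A i j * v j)"
    using adjacency_matrixD[OF assms(1)] assms by (intro sum_nonneg) auto
  have "(\<Sum>j\<in>UNIV. A i j * v j) \<le> (\<Sum>j\<in>(UNIV::'n set). 1)"
    using adjacency_matrixD[OF assms(1)] assms by (intro sum_mono) (simp add: mult_le_one)
  then show "(\<Sum>j\<in>UNIV. A i j * v j) \<le> real CARD('n)" by simp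
qed

lemma adjacency_row_sum_abs_le:
  fixes A :: "'n::finite \<Rightarrow> 'n \<Rightarrow> real"
  assumes "adjacency_matrix A"
  shows "\<bar>\<Sum>j\<in>UNIV. A i j * v j\<bar> \<le> (\<Sum>j\<in>UNIV. \<bar>v j\<bar>)"
proof -
  have "\<bar>\<Sum>j\<in>UNIV. A i j * v j\<bar> \<le> (\<Sum>j\<in>UNIV. \<bar>A i j * v j\<bar>)" by (rule sum_abs)
  also have "\<dots> \<le> (\<Sum>j\<in>UNIV. \<bar>v j\<bar>)"
    using adjacency_matrixD[OF assms] by (intro sum_mono) (simp add: abs_mult mult_left_le_one_le)
  finally show ?thesis .
qed

lemma nimfa_rhs_diff:
  "nimfa_rhs A \<tau> v i - nimfa_rhs A \<tau> w i = - (v i - w i)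
     + \<tau> * ((1 - v i) * (\<Sum>j\<in>UNIV. A i j * (v j - w j)) - (v i - w i) * (\<Sum>j\<in>UNIV. A i j * w j))"
  unfolding nimfa_rhs_def by (simp add: sum_subtractf right_diff_distrib algebra_simps)

lemma nimfa_rhs_lipschitz_unit_cube:
  fixes A :: "'n::finite \<Rightarrow> 'n \<Rightarrow> real"
  assumes adj: "adjacency_matrix A" and tau: "\<tau> \<ge> 0"
    and v: "\<And>j. 0 \<le> v j" "\<And>j. v j \<le> 1" and w: "\<And>j. 0 \<le> w j" "\<And>j. w j \<le> 1"
  shows "\<bar>nimfa_rhs A \<tau> v i - nimfa_rhs A \<tau> w i\<bar>
           \<le> (1 + \<tau> + \<tau> * real CARD('n)) * (\<Sum>j\<in>UNIV. \<bar>v j - w j\<bar>)"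
proof -
  define D where "D = (\<Sum>j\<in>UNIV. \<bar>v j - w j\<bar>)"
  define e where "e = (\<Sum>j\<in>UNIV. A i j * (v j - w j))"
  define f where "f = (\<Sum>j\<in>UNIV. A i j * w j)"
  have vw: "\<bar>v i - w i\<bar> \<le> D" unfolding D_def
    by (rule member_le_sum[where f="\<lambda>j. \<bar>v j - w j\<bar>"]) auto
  have "\<bar>(1 - v i) * e\<bar> \<le> 1 * D" unfolding abs_mult e_def D_def
    using v[of i] by (intro mult_mono adjacency_row_sum_abs_le[OF adj]) auto
  moreover have "\<bar>(v i - w i) * f\<bar> \<le> D * real CARD('n)" unfolding abs_mult f_def
    using adjacency_row_sum_bounds[OF adj w, of i] vw by (intro mult_mono) auto
  ultimately have "\<bar>(1 - v i) * e - (v i - w i) * f\<bar> \<le> D + D * real CARD('n)" by linarith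
  then have "\<bar>\<tau> * ((1 - v i) * e - (v i - w i) * f)\<bar> \<le> \<tau> * (D + D * real CARD('n))"
    using tau by (simp add: abs_mult mult_left_mono)
  then have "\<bar>- (v i - w i) + \<tau> * ((1 - v i) * e - (v i - w i) * f)\<bar> \<le> D + \<tau> * (D + D * real CARD('n))"
    using vw by linarith
  then show ?thesis unfolding nimfa_rhs_diff e_def[symmetric] f_def[symmetric] D_def[symmetric]
    by (simp add: algebra_simps)
qed

text \<open>Solutions are constructed for the field evaluated at the projection onto \<open>[0,1]\<^sup>N\<close>, which is
  globally Lipschitz; as the cube is invariant, they solve NIMFA itself.\<close>

definition clamp01 :: "('n \<Rightarrow> real) \<Rightarrow> 'n \<Rightarrow> real" where
  "clamp01 v j = max 0 (min 1 (v j))"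

definition nimfa_rhs_clamped :: "('n::finite \<Rightarrow> 'n \<Rightarrow> real) \<Rightarrow> real \<Rightarrow> ('n \<Rightarrow> real) \<Rightarrow> 'n \<Rightarrow> real" where
  "nimfa_rhs_clamped A \<tau> v i = nimfa_rhs A \<tau> (clamp01 v) i"

lemma clamp01_bounds: "0 \<le> clamp01 v j" "clamp01 v j \<le> 1"
  unfolding clamp01_def by auto

lemma clamp01_lipschitz: "\<bar>clamp01 v j - clamp01 w j\<bar> \<le> \<bar>v j - w j\<bar>"
  unfolding clamp01_def by (auto simp: max_def min_def)

lemma nimfa_rhs_clamped_lipschitz:
  fixes A :: "'n::finite \<Rightarrow> 'n \<Rightarrow> real"
  assumes "adjacency_matrix A" "\<tau> \<ge> 0"
  shows "\<bar>nimfa_rhs_clamped A \<tau> v i - nimfa_rhs_clamped A \<tau> w i\<bar>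
           \<le> (1 + \<tau> + \<tau> * real CARD('n)) * (\<Sum>j\<in>UNIV. \<bar>v j - w j\<bar>)"
proof -
  have "\<bar>nimfa_rhs_clamped A \<tau> v i - nimfa_rhs_clamped A \<tau> w i\<bar>
      \<le> (1 + \<tau> + \<tau> * real CARD('n)) * (\<Sum>j\<in>UNIV. \<bar>clamp01 v j - clamp01 w j\<bar>)"
    unfolding nimfa_rhs_clamped_def
    by (rule nimfa_rhs_lipschitz_unit_cube[OF assms]) (auto simp: clamp01_bounds)
  also have "\<dots> \<le> (1 + \<tau> + \<tau> * real CARD('n)) * (\<Sum>j\<in>UNIV. \<bar>v j - w j\<bar>)"
    using assms(2) by (intro mult_left_mono sum_mono clamp01_lipschitz) auto
  finally show ?thesis .
qed

lemma nimfa_rhs_clamped_bounded: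
  fixes A :: "'n::finite \<Rightarrow> 'n \<Rightarrow> real"
  assumes adj: "adjacency_matrix A" and tau: "\<tau> \<ge> 0"
  shows "\<bar>nimfa_rhs_clamped A \<tau> v i\<bar> \<le> 1 + \<tau> * real CARD('n)"
proof -
  define c where "c = clamp01 v"
  have c: "\<And>j. 0 \<le> c j" "\<And>j. c j \<le> 1" unfolding c_def by (auto simp: clamp01_bounds)
  define f where "f = (\<Sum>j\<in>UNIV. A i j * c j)"
  have "\<bar>(1 - c i) * f\<bar> \<le> 1 * real CARD('n)" unfolding abs_mult f_def
    using c[of i] adjacency_row_sum_bounds[OF adj c, of i] by (intro mult_mono) auto
  then have "\<bar>\<tau> * (1 - c i) * f\<bar> \<le> \<tau> * real CARD('n)"
    using tau by (simp add: abs_mult mult_left_mono mult.assoc)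
  then show ?thesis unfolding nimfa_rhs_clamped_def nimfa_rhs_def c_def[symmetric] f_def[symmetric]
    using c[of i] by linarith
qed

lemma continuous_on_nimfa_rhs_clamped:
  fixes A :: "'n::finite \<Rightarrow> 'n \<Rightarrow> real"
  assumes "\<And>j. continuous_on S (\<lambda>s. f s j)"
  shows "continuous_on S (\<lambda>s. nimfa_rhs_clamped A \<tau> (f s) i)"
  unfolding nimfa_rhs_clamped_def nimfa_rhs_def clamp01_def
  by (intro continuous_intros assms)

lemma nimfa_solutionD:
  "nimfa_solution A \<tau> V \<Longrightarrow> 0 \<le> t \<Longrightarrow>
     ((\<lambda>s. V s i) has_real_derivative nimfa_rhs A \<tau> (V t) i) (at t within {0..})"
  unfolding nimfa_solution_def by blast

section \<open>Existence of solutions\<close>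

primrec picard :: "('n::finite \<Rightarrow> 'n \<Rightarrow> real) \<Rightarrow> real \<Rightarrow> ('n \<Rightarrow> real) \<Rightarrow> nat \<Rightarrow> real \<Rightarrow> 'n \<Rightarrow> real" where
  "picard A \<tau> v0 0 = (\<lambda>t. v0)"
| "picard A \<tau> v0 (Suc k) =
     (\<lambda>t i. v0 i + integral {0..t} (\<lambda>s. nimfa_rhs_clamped A \<tau> (picard A \<tau> v0 k s) i))"

lemma continuous_on_picard: "continuous_on {0..T} (\<lambda>s. picard A \<tau> v0 k s i)"
proof (induction k arbitrary: i)
  case 0
  then show ?case by simp
next
  case (Suc k)
  have "(\<lambda>s. nimfa_rhs_clamped A \<tau> (picard A \<tau> v0 k s) i) integrable_on {0..T}"
    by (intro integrable_continuous_real continuous_on_nimfa_rhs_clamped Suc.IH)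
  then have "continuous_on {0..T} (\<lambda>t. integral {0..t} (\<lambda>s. nimfa_rhs_clamped A \<tau> (picard A \<tau> v0 k s) i))"
    by (rule indefinite_integral_continuous_1)
  then show ?case by (auto intro!: continuous_intros)
qed

lemma picard_integrable: "(\<lambda>s. nimfa_rhs_clamped A \<tau> (picard A \<tau> v0 k s) i) integrable_on {0..T}"
  by (intro integrable_continuous_real continuous_on_nimfa_rhs_clamped continuous_on_picard)

definition picard_limit :: "('n::finite \<Rightarrow> 'n \<Rightarrow> real) \<Rightarrow> real \<Rightarrow> ('n \<Rightarrow> real) \<Rightarrow> real \<Rightarrow> 'n \<Rightarrow> real" where
  "picard_limit A \<tau> v0 t i = v0 i + (\<Sum>m. picard A \<tau> v0 (Suc m) t i - picard A \<tau> v0 m t i)"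

lemma picard_telescope:
  "v0 i + (\<Sum>m<n. picard A \<tau> v0 (Suc m) t i - picard A \<tau> v0 m t i) = picard A \<tau> v0 n t i"
  by (subst sum_lessThan_telescope) simp

context
  fixes A :: "'n::finite \<Rightarrow> 'n \<Rightarrow> real" and \<tau> :: real
  assumes adj: "adjacency_matrix A" and tau: "\<tau> \<ge> 0"
begin

definition "picard_bound = 1 + \<tau> * real CARD('n)"
definition "picard_rate = (1 + \<tau> + \<tau> * real CARD('n)) * real CARD('n)"

lemma picard_constants_pos: "picard_bound > 0" "picard_rate > 0"
  using tau unfolding picard_bound_def picard_rate_def by (auto intro!: add_pos_nonneg mult_pos_pos)

lemma picard_increment_bound:
  "0 \<le> t \<Longrightarrow> \<bar>picard A \<tau> v0 (Suc k) t i - picard A \<tau> v0 k t i\<bar>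
     \<le> picard_bound * picard_rate ^ k * t ^ Suc k / fact (Suc k)"
proof (induction k arbitrary: t i)
  case 0
  have "norm (integral {0..t} (\<lambda>s. nimfa_rhs_clamped A \<tau> v0 i)) \<le> integral {0..t} (\<lambda>s. picard_bound)"
    by (rule integral_norm_bound_integral)
       (use nimfa_rhs_clamped_bounded[OF adj tau] in \<open>auto simp: picard_bound_def\<close>)
  then show ?case using 0 by (simp add: mult.commute)
next
  case (Suc k)
  let ?g = "\<lambda>k s. nimfa_rhs_clamped A \<tau> (picard A \<tau> v0 k s) i"
  let ?c = "picard_rate * (picard_bound * picard_rate ^ k / fact (Suc k))"
  have "picard A \<tau> v0 (Suc (Suc k)) t i - picard A \<tau> v0 (Suc k) t i
      = integral {0..t} (?g (Suc k)) - integral {0..t} (?g k)"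
    by (simp only: picard.simps(2))
  also have "\<dots> = integral {0..t} (\<lambda>s. ?g (Suc k) s - ?g k s)"
    by (rule integral_diff[symmetric]) (rule picard_integrable)+
  finally have "\<bar>picard A \<tau> v0 (Suc (Suc k)) t i - picard A \<tau> v0 (Suc k) t i\<bar>
      = norm (integral {0..t} (\<lambda>s. ?g (Suc k) s - ?g k s))" by simp
  also have "\<dots> \<le> integral {0..t} (\<lambda>s. ?c * s ^ Suc k)"
  proof (rule integral_norm_bound_integral)
    show "(\<lambda>s. ?g (Suc k) s - ?g k s) integrable_on {0..t}"
      by (intro integrable_diff picard_integrable)
    show "(\<lambda>s. ?c * s ^ Suc k) integrable_on {0..t}"
      by (intro integrable_continuous_real continuous_intros)
    fix s assume s: "s \<in> {0..t}"
    have "\<bar>?g (Suc k) s - ?g k s\<bar>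
        \<le> (1 + \<tau> + \<tau> * real CARD('n)) * (\<Sum>j\<in>UNIV. \<bar>picard A \<tau> v0 (Suc k) s j - picard A \<tau> v0 k s j\<bar>)"
      by (rule nimfa_rhs_clamped_lipschitz[OF adj tau])
    also have "\<dots> \<le> (1 + \<tau> + \<tau> * real CARD('n))
        * (\<Sum>j\<in>(UNIV::'n set). picard_bound * picard_rate ^ k * s ^ Suc k / fact (Suc k))"
      using tau s by (intro mult_left_mono sum_mono Suc.IH) auto
    also have "\<dots> = ?c * s ^ Suc k"
      unfolding picard_rate_def by simp
    finally show "norm (?g (Suc k) s - ?g k s) \<le> ?c * s ^ Suc k" by simp
  qed
  also have "\<dots> = ?c * t ^ Suc (Suc k) / Suc (Suc k)"
    using has_integral_monomial[OF Suc.prems] by (rule integral_unique)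
  also have "\<dots> = picard_bound * picard_rate ^ Suc k * t ^ Suc (Suc k) / fact (Suc (Suc k))"
    by (simp add: field_simps del: of_nat_Suc)
  finally show ?case .
qed

lemma summable_picard_increment_bound:
  "summable (\<lambda>m. picard_bound * picard_rate ^ m * t ^ Suc m / fact (Suc m))"
proof -
  have "summable (\<lambda>n. inverse (fact (Suc n)) * (picard_rate * t) ^ Suc n)"
    using summable_exp[of "picard_rate * t"] by (subst summable_Suc_iff)
  then have "summable (\<lambda>n. picard_bound / picard_rate
      * (inverse (fact (Suc n)) * (picard_rate * t) ^ Suc n))"
    by (rule summable_mult)
  moreover have "picard_bound / picard_rate * (inverse (fact (Suc n)) * (picard_rate * t) ^ Suc n)
      = picard_bound * picard_rate ^ n * t ^ Suc n / fact (Suc n)" for n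
    using picard_constants_pos by (simp add: power_mult_distrib field_simps del: fact_Suc)
  ultimately show ?thesis by simp
qed

lemma picard_uniform_limit:
  assumes "0 \<le> T"
  shows "uniform_limit {0..T} (\<lambda>n s. picard A \<tau> v0 n s i) (\<lambda>s. picard_limit A \<tau> v0 s i) sequentially"
proof -
  have "uniform_limit {0..T} (\<lambda>n s. \<Sum>m<n. picard A \<tau> v0 (Suc m) s i - picard A \<tau> v0 m s i)
      (\<lambda>s. \<Sum>m. picard A \<tau> v0 (Suc m) s i - picard A \<tau> v0 m s i) sequentially"
  proof (rule Weierstrass_m_test[OF _ summable_picard_increment_bound])
    fix n s assume s: "s \<in> {0..T}"
    have "\<bar>picard A \<tau> v0 (Suc n) s i - picard A \<tau> v0 n s i\<bar>
        \<le> picard_bound * picard_rate ^ n * s ^ Suc n / fact (Suc n)"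
      using s by (intro picard_increment_bound) auto
    also have "\<dots> \<le> picard_bound * picard_rate ^ n * T ^ Suc n / fact (Suc n)"
      using s picard_constants_pos by (intro divide_right_mono mult_left_mono power_mono) auto
    finally show "norm (picard A \<tau> v0 (Suc n) s i - picard A \<tau> v0 n s i)
        \<le> picard_bound * picard_rate ^ n * T ^ Suc n / fact (Suc n)"
      by simp
  qed
  from uniform_limit_add[OF uniform_limit_const[of "\<lambda>s. v0 i"] this]
  show ?thesis unfolding picard_telescope picard_limit_def .
qed

lemma continuous_on_picard_limit:
  assumes "0 \<le> T"
  shows "continuous_on {0..T} (\<lambda>s. picard_limit A \<tau> v0 s i)"
  by (rule uniform_limit_theorem[OF _ picard_uniform_limit[OF assms]])
     (auto intro: always_eventually continuous_on_picard)

lemma nimfa_rhs_clamped_picard_uniform_limit: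
  assumes "0 \<le> T"
  shows "uniform_limit {0..T} (\<lambda>n s. nimfa_rhs_clamped A \<tau> (picard A \<tau> v0 n s) i)
           (\<lambda>s. nimfa_rhs_clamped A \<tau> (picard_limit A \<tau> v0 s) i) sequentially"
proof (rule uniform_limitI)
  fix e :: real assume e: "0 < e"
  define \<delta> where "\<delta> = e / picard_rate"
  have \<delta>: "\<delta> > 0" unfolding \<delta>_def using e picard_constants_pos by auto
  have lip_pos: "0 < 1 + \<tau> + \<tau> * real CARD('n)" using tau by (simp add: add_pos_nonneg)
  have "\<forall>\<^sub>F n in sequentially. \<forall>j. \<forall>x\<in>{0..T}. dist (picard A \<tau> v0 n x j) (picard_limit A \<tau> v0 x j) < \<delta>"
    by (intro eventually_all_finite uniform_limitD[OF picard_uniform_limit[OF assms] \<delta>])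
  then show "\<forall>\<^sub>F n in sequentially. \<forall>x\<in>{0..T}.
      dist (nimfa_rhs_clamped A \<tau> (picard A \<tau> v0 n x) i) (nimfa_rhs_clamped A \<tau> (picard_limit A \<tau> v0 x) i) < e"
  proof (rule eventually_mono, intro ballI)
    fix n x assume close: "\<forall>j. \<forall>x\<in>{0..T}. dist (picard A \<tau> v0 n x j) (picard_limit A \<tau> v0 x j) < \<delta>"
      and x: "x \<in> {0..T}"
    have "\<bar>nimfa_rhs_clamped A \<tau> (picard A \<tau> v0 n x) i - nimfa_rhs_clamped A \<tau> (picard_limit A \<tau> v0 x) i\<bar>
        \<le> (1 + \<tau> + \<tau> * real CARD('n)) * (\<Sum>j\<in>UNIV. \<bar>picard A \<tau> v0 n x j - picard_limit A \<tau> v0 x j\<bar>)"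
      by (rule nimfa_rhs_clamped_lipschitz[OF adj tau])
    also have "\<dots> < (1 + \<tau> + \<tau> * real CARD('n)) * (\<Sum>j\<in>(UNIV::'n set). \<delta>)"
      using close x lip_pos by (intro mult_strict_left_mono sum_strict_mono) (auto simp: dist_real_def)
    also have "\<dots> = e" unfolding \<delta>_def picard_rate_def using lip_pos by simp
    finally show "dist (nimfa_rhs_clamped A \<tau> (picard A \<tau> v0 n x) i)
        (nimfa_rhs_clamped A \<tau> (picard_limit A \<tau> v0 x) i) < e"
      by (simp add: dist_real_def)
  qed
qed

lemma picard_limit_integral_eq:
  assumes "0 \<le> t"
  shows "picard_limit A \<tau> v0 t i = v0 i + integral {0..t} (\<lambda>s. nimfa_rhs_clamped A \<tau> (picard_limit A \<tau> v0 s) i)"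
proof -
  obtain I J where I: "\<And>n. ((\<lambda>s. nimfa_rhs_clamped A \<tau> (picard A \<tau> v0 n s) i) has_integral I n) (cbox 0 t)"
    and J: "((\<lambda>s. nimfa_rhs_clamped A \<tau> (picard_limit A \<tau> v0 s) i) has_integral J) (cbox 0 t)"
    and lim: "I \<longlonglongrightarrow> J"
    by (rule uniform_limit_integral_cbox[where a=0 and b=t and F=sequentially
          and f="\<lambda>n s. nimfa_rhs_clamped A \<tau> (picard A \<tau> v0 n s) i"
          and g="\<lambda>s. nimfa_rhs_clamped A \<tau> (picard_limit A \<tau> v0 s) i"])
       (use nimfa_rhs_clamped_picard_uniform_limit[OF assms] in
        \<open>auto intro: continuous_on_nimfa_rhs_clamped continuous_on_picard\<close>)
  have "picard A \<tau> v0 (Suc n) t i = v0 i + I n" for n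
    using integral_unique[OF I[of n]] by simp
  then have "(\<lambda>n. picard A \<tau> v0 (Suc n) t i) \<longlonglongrightarrow> v0 i + J"
    by (simp add: tendsto_add[OF tendsto_const lim])
  moreover have "(\<lambda>n. picard A \<tau> v0 (Suc n) t i) \<longlonglongrightarrow> picard_limit A \<tau> v0 t i"
    using picard_uniform_limit[OF assms, of v0 i] assms
    by (intro LIMSEQ_Suc) (auto dest: tendsto_uniform_limitI)
  ultimately show ?thesis using integral_unique[OF J] LIMSEQ_unique by simp
qed

lemma picard_limit_has_derivative:
  assumes "0 \<le> t"
  shows "((\<lambda>s. picard_limit A \<tau> v0 s i) has_real_derivative nimfa_rhs_clamped A \<tau> (picard_limit A \<tau> v0 t) i)
           (at t within {0..})"
proof -
  let ?G = "\<lambda>s. nimfa_rhs_clamped A \<tau> (picard_limit A \<tau> v0 s) i"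
  have "((\<lambda>u. integral {0..u} ?G) has_vector_derivative ?G t) (at t within {0..t+1})"
    using assms by (intro integral_has_vector_derivative continuous_on_nimfa_rhs_clamped
        continuous_on_picard_limit) auto
  then have "((\<lambda>u. v0 i + integral {0..u} ?G) has_real_derivative ?G t) (at t within {0..t+1})"
    by (auto intro!: derivative_eq_intros simp: has_real_derivative_iff_has_vector_derivative)
  then have "((\<lambda>s. picard_limit A \<tau> v0 s i) has_real_derivative ?G t) (at t within {0..t+1})"
    by (rule has_field_derivative_transform_within[where d=1]) (use assms picard_limit_integral_eq in auto)
  moreover have "at t within {0..t+1} = at t within {0..}"
    by (rule at_within_nhd[where S="{..<t+1}"]) auto
  ultimately show ?thesis by simp
qed

lemma picard_limit_0: "picard_limit A \<tau> v0 0 = v0"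
  using picard_limit_integral_eq[of 0] by (auto simp: fun_eq_iff)

end

lemma clamped_solution_nonneg:
  fixes A :: "'n::finite \<Rightarrow> 'n \<Rightarrow> real"
  assumes adj: "adjacency_matrix A" and tau: "\<tau> \<ge> 0"
    and der: "\<And>t i. 0 \<le> t \<Longrightarrow>
      ((\<lambda>s. X s i) has_real_derivative nimfa_rhs_clamped A \<tau> (X t) i) (at t within {0..})"
    and init: "\<And>i. 0 \<le> X 0 i" and t: "0 \<le> t"
  shows "0 \<le> X t i"
proof -
  let ?\<phi> = "\<lambda>s. \<Sum>i\<in>UNIV. (max (- X s i) 0)\<^sup>2"
  have "?\<phi> t \<le> 0"
  proof (rule gronwall_nonpos[where C=0 and T=t and \<phi>="?\<phi>"])
    fix s :: real assume s: "0 \<le> s" "s \<le> t"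
    show "(?\<phi> has_real_derivative (\<Sum>i\<in>UNIV. 2 * max (- X s i) 0 * (- nimfa_rhs_clamped A \<tau> (X s) i)))
        (at s within {0..})"
      by (intro DERIV_sum DERIV_max_zero_square DERIV_minus der s)
    have "2 * max (- X s i) 0 * (- nimfa_rhs_clamped A \<tau> (X s) i) \<le> 0" for i
    proof (cases "X s i < 0")
      case True
      then have "clamp01 (X s) i = 0" unfolding clamp01_def by auto
      then have "nimfa_rhs_clamped A \<tau> (X s) i \<ge> 0" unfolding nimfa_rhs_clamped_def nimfa_rhs_def
        using adjacency_row_sum_bounds[OF adj, of "clamp01 (X s)" i] tau by (simp add: clamp01_bounds)
      then show ?thesis using True by (simp add: mult_nonpos_nonneg)
    qed auto
    then show "(\<Sum>i\<in>UNIV. 2 * max (- X s i) 0 * (- nimfa_rhs_clamped A \<tau> (X s) i)) \<le> 0 * ?\<phi> s"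
      by (simp add: sum_nonpos)
  qed (use init t in auto)
  then show ?thesis using sum_squares_nonpos_imp_zero[of "\<lambda>i. max (- X t i) 0" i] by linarith
qed

lemma clamped_solution_le_one:
  fixes A :: "'n::finite \<Rightarrow> 'n \<Rightarrow> real"
  assumes der: "\<And>t i. 0 \<le> t \<Longrightarrow>
      ((\<lambda>s. X s i) has_real_derivative nimfa_rhs_clamped A \<tau> (X t) i) (at t within {0..})"
    and init: "\<And>i. X 0 i \<le> 1" and t: "0 \<le> t"
  shows "X t i \<le> 1"
proof -
  let ?\<phi> = "\<lambda>s. \<Sum>i\<in>UNIV. (max (X s i - 1) 0)\<^sup>2"
  have "?\<phi> t \<le> 0"
  proof (rule gronwall_nonpos[where C=0 and T=t and \<phi>="?\<phi>"])
    fix s :: real assume s: "0 \<le> s" "s \<le> t"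
    show "(?\<phi> has_real_derivative (\<Sum>i\<in>UNIV. 2 * max (X s i - 1) 0 * (nimfa_rhs_clamped A \<tau> (X s) i - 0)))
        (at s within {0..})"
      by (intro DERIV_sum DERIV_max_zero_square DERIV_diff DERIV_const der s)
    have "2 * max (X s i - 1) 0 * (nimfa_rhs_clamped A \<tau> (X s) i - 0) \<le> 0" for i
    proof (cases "X s i > 1")
      case True
      then have "clamp01 (X s) i = 1" unfolding clamp01_def by auto
      then have "nimfa_rhs_clamped A \<tau> (X s) i = -1" unfolding nimfa_rhs_clamped_def nimfa_rhs_def by simp
      then show ?thesis using True by simp
    qed auto
    then show "(\<Sum>i\<in>UNIV. 2 * max (X s i - 1) 0 * (nimfa_rhs_clamped A \<tau> (X s) i - 0)) \<le> 0 * ?\<phi> s"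
      by (simp add: sum_nonpos)
  qed (use init t in auto)
  then show ?thesis using sum_squares_nonpos_imp_zero[of "\<lambda>i. max (X t i - 1) 0" i] by linarith
qed

lemma nimfa_solution_exists:
  fixes A :: "'n::finite \<Rightarrow> 'n \<Rightarrow> real"
  assumes adj: "adjacency_matrix A" and tau: "\<tau> \<ge> 0"
    and v0: "\<And>i. 0 \<le> v0 i" "\<And>i. v0 i \<le> 1"
  obtains V where "nimfa_solution A \<tau> V" "V 0 = v0" "\<And>t i. 0 \<le> t \<Longrightarrow> 0 \<le> V t i \<and> V t i \<le> 1"
proof
  let ?V = "picard_limit A \<tau> v0"
  have der: "\<And>t i. 0 \<le> t \<Longrightarrow>
      ((\<lambda>s. ?V s i) has_real_derivative nimfa_rhs_clamped A \<tau> (?V t) i) (at t within {0..})"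
    by (rule picard_limit_has_derivative[OF adj tau])
  show V0: "?V 0 = v0" by (rule picard_limit_0[OF adj tau])
  show cube: "0 \<le> ?V t i \<and> ?V t i \<le> 1" if "0 \<le> t" for t i
    using clamped_solution_nonneg[OF adj tau der] clamped_solution_le_one[OF der] v0 V0 that
    by auto
  show "nimfa_solution A \<tau> ?V"
    unfolding nimfa_solution_def
  proof (intro allI impI)
    fix t :: real and i assume t: "0 \<le> t"
    have "clamp01 (?V t) = ?V t" using cube[OF t] unfolding clamp01_def by (auto simp: fun_eq_iff)
    then show "((\<lambda>s. ?V s i) has_real_derivative nimfa_rhs A \<tau> (?V t) i) (at t within {0..})"
      using der[OF t, of i] unfolding nimfa_rhs_clamped_def by simp
  qed
qed

section \<open>Uniqueness and comparison\<close>

text \<open>In the one-sided estimate only the positive parts \<open>(v\<^sub>j - w\<^sub>j)\<^sup>+\<close> enter on the right, because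
  the field is cooperative: \<open>f\<^sub>i\<close> is nondecreasing in \<open>v\<^sub>j\<close> for \<open>j \<noteq> i\<close>.\<close>

lemma nimfa_rhs_diff_energy_le:
  fixes A :: "'n::finite \<Rightarrow> 'n \<Rightarrow> real"
  assumes adj: "adjacency_matrix A" and tau: "\<tau> \<ge> 0"
    and v: "\<And>j. \<bar>1 - v j\<bar> \<le> B" and w: "\<And>j. 0 \<le> w j" "\<And>j. w j \<le> 1"
  shows "(\<Sum>i\<in>UNIV. 2 * (v i - w i) * (nimfa_rhs A \<tau> v i - nimfa_rhs A \<tau> w i))
           \<le> 2 * \<tau> * B * real CARD('n) * (\<Sum>i\<in>UNIV. (v i - w i)\<^sup>2)"
proof -
  define D where "D j = v j - w j" for j
  have B0: "B \<ge> 0" using v[of undefined] by linarith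
  have pointwise: "D i * (nimfa_rhs A \<tau> v i - nimfa_rhs A \<tau> w i) \<le> \<tau> * B * (\<bar>D i\<bar> * (\<Sum>j\<in>UNIV. \<bar>D j\<bar>))" for i
  proof -
    have "\<bar>D i * (1 - v i) * (\<Sum>j\<in>UNIV. A i j * D j)\<bar> \<le> \<bar>D i\<bar> * B * (\<Sum>j\<in>UNIV. \<bar>D j\<bar>)"
      unfolding abs_mult using v[of i] adjacency_row_sum_abs_le[OF adj] B0
      by (intro mult_mono mult_left_mono) auto
    then have b: "D i * (1 - v i) * (\<Sum>j\<in>UNIV. A i j * D j) \<le> B * (\<bar>D i\<bar> * (\<Sum>j\<in>UNIV. \<bar>D j\<bar>))"
      by (simp add: algebra_simps)
    have c: "D i * D i * (\<Sum>j\<in>UNIV. A i j * w j) \<ge> 0"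
      using adjacency_row_sum_bounds[OF adj w] by simp
    have "D i * (nimfa_rhs A \<tau> v i - nimfa_rhs A \<tau> w i) = - (D i * D i)
       + \<tau> * (D i * (1 - v i) * (\<Sum>j\<in>UNIV. A i j * D j) - D i * D i * (\<Sum>j\<in>UNIV. A i j * w j))"
      unfolding nimfa_rhs_diff D_def by (simp add: algebra_simps)
    also have "\<dots> \<le> \<tau> * (B * (\<bar>D i\<bar> * (\<Sum>j\<in>UNIV. \<bar>D j\<bar>)))"
      using b c tau by (smt (verit, ccfv_SIG) mult_left_mono zero_le_square)
    finally show ?thesis by (simp add: mult.assoc)
  qed
  have "(\<Sum>i\<in>UNIV. 2 * D i * (nimfa_rhs A \<tau> v i - nimfa_rhs A \<tau> w i))
      \<le> (\<Sum>i\<in>UNIV. 2 * (\<tau> * B * (\<bar>D i\<bar> * (\<Sum>j\<in>UNIV. \<bar>D j\<bar>))))"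
    using pointwise by (intro sum_mono) (simp add: mult.assoc)
  also have "\<dots> = 2 * \<tau> * B * (\<Sum>j\<in>UNIV. \<bar>D j\<bar>)\<^sup>2"
    by (simp add: sum_distrib_left[symmetric] sum_distrib_right[symmetric] power2_eq_square algebra_simps)
  also have "\<dots> \<le> 2 * \<tau> * B * (real CARD('n) * (\<Sum>i\<in>UNIV. (D i)\<^sup>2))"
    using tau B0 by (intro mult_left_mono sum_abs_squared_le) auto
  finally show ?thesis unfolding D_def by (simp add: algebra_simps)
qed

lemma nimfa_rhs_positive_part_energy_le:
  fixes A :: "'n::finite \<Rightarrow> 'n \<Rightarrow> real"
  assumes adj: "adjacency_matrix A" and tau: "\<tau> \<ge> 0"
    and v: "\<And>j. 0 \<le> v j" "\<And>j. v j \<le> 1" and w: "\<And>j. 0 \<le> w j" "\<And>j. w j \<le> 1"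
  shows "(\<Sum>i\<in>UNIV. 2 * max (v i - w i) 0 * (nimfa_rhs A \<tau> v i - nimfa_rhs A \<tau> w i))
           \<le> 2 * \<tau> * real CARD('n) * (\<Sum>i\<in>UNIV. (max (v i - w i) 0)\<^sup>2)"
proof -
  define P where "P j = max (v j - w j) 0" for j
  have P0: "P j \<ge> 0" for j unfolding P_def by simp
  have pointwise: "P i * (nimfa_rhs A \<tau> v i - nimfa_rhs A \<tau> w i) \<le> \<tau> * P i * (\<Sum>j\<in>UNIV. P j)" for i
  proof -
    have a: "P i * (v i - w i) \<ge> 0" unfolding P_def by (auto simp: max_def)
    have AP: "(\<Sum>j\<in>UNIV. A i j * (v j - w j)) \<le> (\<Sum>j\<in>UNIV. A i j * P j)"
      using adjacency_matrixD[OF adj] by (intro sum_mono mult_left_mono) (auto simp: P_def)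
    have AP0: "0 \<le> (\<Sum>j\<in>UNIV. A i j * P j)"
      using adjacency_matrixD[OF adj] P0 by (intro sum_nonneg) auto
    have AP1: "(\<Sum>j\<in>UNIV. A i j * P j) \<le> (\<Sum>j\<in>UNIV. P j)"
      using adjacency_matrixD[OF adj] P0 by (intro sum_mono) (simp add: mult_left_le_one_le)
    have "P i * (1 - v i) * (\<Sum>j\<in>UNIV. A i j * (v j - w j)) \<le> P i * (1 - v i) * (\<Sum>j\<in>UNIV. A i j * P j)"
      using AP P0[of i] v[of i] by (intro mult_left_mono) auto
    also have "\<dots> \<le> P i * 1 * (\<Sum>j\<in>UNIV. A i j * P j)"
      using P0[of i] v[of i] AP0 by (intro mult_right_mono mult_left_mono) auto
    also have "\<dots> \<le> P i * (\<Sum>j\<in>UNIV. P j)" using AP1 P0[of i] by (simp add: mult_left_mono)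
    finally have b: "P i * (1 - v i) * (\<Sum>j\<in>UNIV. A i j * (v j - w j)) \<le> P i * (\<Sum>j\<in>UNIV. P j)" .
    have c: "P i * (v i - w i) * (\<Sum>j\<in>UNIV. A i j * w j) \<ge> 0"
      using a adjacency_row_sum_bounds[OF adj w] by simp
    have "P i * (nimfa_rhs A \<tau> v i - nimfa_rhs A \<tau> w i) = - (P i * (v i - w i))
       + \<tau> * (P i * (1 - v i) * (\<Sum>j\<in>UNIV. A i j * (v j - w j)) - P i * (v i - w i) * (\<Sum>j\<in>UNIV. A i j * w j))"
      unfolding nimfa_rhs_diff by (simp add: algebra_simps)
    also have "\<dots> \<le> \<tau> * (P i * (\<Sum>j\<in>UNIV. P j))"
      using a b c tau by (smt (verit, ccfv_SIG) mult_left_mono)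
    finally show ?thesis by (simp add: mult.assoc)
  qed
  have "(\<Sum>i\<in>UNIV. 2 * P i * (nimfa_rhs A \<tau> v i - nimfa_rhs A \<tau> w i))
      \<le> (\<Sum>i\<in>UNIV. 2 * (\<tau> * P i * (\<Sum>j\<in>UNIV. P j)))"
    using pointwise by (intro sum_mono) (simp add: mult.assoc)
  also have "\<dots> = 2 * \<tau> * (\<Sum>j\<in>UNIV. \<bar>P j\<bar>)\<^sup>2"
    using P0 by (simp add: sum_distrib_left[symmetric] sum_distrib_right[symmetric] power2_eq_square algebra_simps)
  also have "\<dots> \<le> 2 * \<tau> * (real CARD('n) * (\<Sum>i\<in>UNIV. (P i)\<^sup>2))"
    using tau by (intro mult_left_mono sum_abs_squared_le) auto
  finally show ?thesis unfolding P_def by (simp add: algebra_simps)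
qed

lemma nimfa_solution_bounded:
  fixes V :: "real \<Rightarrow> 'n::finite \<Rightarrow> real"
  assumes V: "nimfa_solution A \<tau> V"
  obtains B where "\<forall>s\<in>{0..t}. \<forall>j. \<bar>1 - V s j\<bar> \<le> B"
proof -
  have "\<exists>b. \<forall>s\<in>{0..t}. \<bar>V s i\<bar> \<le> b" for i
  proof -
    have "continuous_on {0..t} (\<lambda>s. V s i)"
      by (rule continuous_on_if_has_real_derivative_within_atLeast[OF nimfa_solutionD[OF V]])
    then have "compact ((\<lambda>s. V s i) ` {0..t})" by (intro compact_continuous_image) auto
    then show ?thesis using compact_imp_bounded bounded_real by fastforce
  qed
  then obtain b where b: "\<And>i s. s \<in> {0..t} \<Longrightarrow> \<bar>V s i\<bar> \<le> b i" by metis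
  have "\<bar>1 - V s j\<bar> \<le> 1 + (\<Sum>i\<in>UNIV. \<bar>b i\<bar>)" if "s \<in> {0..t}" for s j
  proof -
    have "\<bar>b j\<bar> \<le> (\<Sum>i\<in>UNIV. \<bar>b i\<bar>)" by (rule member_le_sum) auto
    then show ?thesis using b[OF that, of j] by linarith
  qed
  then show thesis by (intro that) blast
qed

lemma nimfa_solution_unique:
  fixes A :: "'n::finite \<Rightarrow> 'n \<Rightarrow> real"
  assumes adj: "adjacency_matrix A" and tau: "\<tau> \<ge> 0"
    and V: "nimfa_solution A \<tau> V" and W: "nimfa_solution A \<tau> W"
    and W_cube: "\<And>t i. 0 \<le> t \<Longrightarrow> 0 \<le> W t i \<and> W t i \<le> 1"
    and init: "V 0 = W 0" and t: "0 \<le> t"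
  shows "V t = W t"
proof -
  obtain B where B: "\<forall>s\<in>{0..t}. \<forall>j. \<bar>1 - V s j\<bar> \<le> B"
    by (rule nimfa_solution_bounded[OF V])
  let ?\<phi> = "\<lambda>s. \<Sum>i\<in>UNIV. (V s i - W s i)\<^sup>2"
  have "?\<phi> t \<le> 0"
  proof (rule gronwall_nonpos[where C="2 * \<tau> * B * real CARD('n)" and T=t and \<phi>="?\<phi>"])
    fix s :: real assume s: "0 \<le> s" "s \<le> t"
    show "(?\<phi> has_real_derivative
        (\<Sum>i\<in>UNIV. 2 * (V s i - W s i) * (nimfa_rhs A \<tau> (V s) i - nimfa_rhs A \<tau> (W s) i))) (at s within {0..})"
    proof (intro DERIV_sum)
      fix i :: 'n
      have "((\<lambda>s. V s i - W s i) has_real_derivative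
          (nimfa_rhs A \<tau> (V s) i - nimfa_rhs A \<tau> (W s) i)) (at s within {0..})"
        by (intro DERIV_diff nimfa_solutionD[OF V] nimfa_solutionD[OF W] s)
      from DERIV_pow[THEN DERIV_chain2, OF this, of 2]
      show "((\<lambda>s. (V s i - W s i)\<^sup>2) has_real_derivative
          2 * (V s i - W s i) * (nimfa_rhs A \<tau> (V s) i - nimfa_rhs A \<tau> (W s) i)) (at s within {0..})"
        by simp
    qed
    show "(\<Sum>i\<in>UNIV. 2 * (V s i - W s i) * (nimfa_rhs A \<tau> (V s) i - nimfa_rhs A \<tau> (W s) i))
        \<le> 2 * \<tau> * B * real CARD('n) * ?\<phi> s"
      by (rule nimfa_rhs_diff_energy_le[OF adj tau]) (use B s W_cube in auto)
  qed (use init t in auto)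
  then have "V t i - W t i = 0" for i by (rule sum_squares_nonpos_imp_zero)
  then show ?thesis by (auto simp: fun_eq_iff)
qed

lemma nimfa_solution_in_unit_cube:
  fixes A :: "'n::finite \<Rightarrow> 'n \<Rightarrow> real"
  assumes adj: "adjacency_matrix A" and tau: "\<tau> \<ge> 0" and V: "nimfa_solution A \<tau> V"
    and init: "\<And>i. 0 \<le> V 0 i" "\<And>i. V 0 i \<le> 1" and t: "0 \<le> t"
  shows "0 \<le> V t i \<and> V t i \<le> 1"
proof -
  obtain W where W: "nimfa_solution A \<tau> W" "W 0 = V 0" "\<And>t i. 0 \<le> t \<Longrightarrow> 0 \<le> W t i \<and> W t i \<le> 1"
    by (rule nimfa_solution_exists[OF adj tau, of "V 0"]) (use init in auto)
  have "V t = W t" by (rule nimfa_solution_unique[OF adj tau V W(1) W(3) W(2)[symmetric] t])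
  then show ?thesis using W(3) t by auto
qed

lemma nimfa_comparison:
  fixes A :: "'n::finite \<Rightarrow> 'n \<Rightarrow> real"
  assumes adj: "adjacency_matrix A" and tau: "\<tau> \<ge> 0"
    and X: "\<And>s i. 0 \<le> s \<Longrightarrow> ((\<lambda>s. X s i) has_real_derivative dX s i) (at s within {0..})"
    and Y: "\<And>s i. 0 \<le> s \<Longrightarrow> ((\<lambda>s. Y s i) has_real_derivative dY s i) (at s within {0..})"
    and X_cube: "\<And>s i. 0 \<le> s \<Longrightarrow> 0 \<le> X s i \<and> X s i \<le> 1"
    and Y_cube: "\<And>s i. 0 \<le> s \<Longrightarrow> 0 \<le> Y s i \<and> Y s i \<le> 1"
    and X_sub: "\<And>s i. 0 \<le> s \<Longrightarrow> dX s i \<le> nimfa_rhs A \<tau> (X s) i"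
    and Y_super: "\<And>s i. 0 \<le> s \<Longrightarrow> nimfa_rhs A \<tau> (Y s) i \<le> dY s i"
    and init: "\<And>i. X 0 i \<le> Y 0 i" and t: "0 \<le> t"
  shows "X t i \<le> Y t i"
proof -
  let ?\<phi> = "\<lambda>s. \<Sum>i\<in>UNIV. (max (X s i - Y s i) 0)\<^sup>2"
  have "?\<phi> t \<le> 0"
  proof (rule gronwall_nonpos[where C="2 * \<tau> * real CARD('n)" and T=t and \<phi>="?\<phi>"])
    fix s :: real assume s: "0 \<le> s" "s \<le> t"
    show "(?\<phi> has_real_derivative (\<Sum>i\<in>UNIV. 2 * max (X s i - Y s i) 0 * (dX s i - dY s i))) (at s within {0..})"
      by (intro DERIV_sum DERIV_max_zero_square DERIV_diff X Y s)
    have "(\<Sum>i\<in>UNIV. 2 * max (X s i - Y s i) 0 * (dX s i - dY s i))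
        \<le> (\<Sum>i\<in>UNIV. 2 * max (X s i - Y s i) 0 * (nimfa_rhs A \<tau> (X s) i - nimfa_rhs A \<tau> (Y s) i))"
    proof (intro sum_mono)
      fix i
      have "dX s i - dY s i \<le> nimfa_rhs A \<tau> (X s) i - nimfa_rhs A \<tau> (Y s) i"
        using X_sub[of s i] Y_super[of s i] s by linarith
      then show "2 * max (X s i - Y s i) 0 * (dX s i - dY s i)
          \<le> 2 * max (X s i - Y s i) 0 * (nimfa_rhs A \<tau> (X s) i - nimfa_rhs A \<tau> (Y s) i)"
        by (intro mult_left_mono) auto
    qed
    also have "\<dots> \<le> 2 * \<tau> * real CARD('n) * ?\<phi> s"
      by (rule nimfa_rhs_positive_part_energy_le[OF adj tau]) (use X_cube Y_cube s in auto)
    finally show "(\<Sum>i\<in>UNIV. 2 * max (X s i - Y s i) 0 * (dX s i - dY s i)) \<le> 2 * \<tau> * real CARD('n) * ?\<phi> s" .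
  qed (use init t in \<open>auto intro!: sum_nonpos simp: max_def\<close>)
  then show ?thesis using sum_squares_nonpos_imp_zero[of "\<lambda>i. max (X t i - Y t i) 0" i] by linarith
qed

lemma nimfa_solution_comparison:
  fixes A :: "'n::finite \<Rightarrow> 'n \<Rightarrow> real"
  assumes adj: "adjacency_matrix A" and tau: "\<tau> \<ge> 0"
    and V: "nimfa_solution A \<tau> V" and W: "nimfa_solution A \<tau> W"
    and V_cube: "\<And>s i. 0 \<le> s \<Longrightarrow> 0 \<le> V s i \<and> V s i \<le> 1"
    and W_cube: "\<And>s i. 0 \<le> s \<Longrightarrow> 0 \<le> W s i \<and> W s i \<le> 1"
    and init: "\<And>i. V 0 i \<le> W 0 i" and t: "0 \<le> t"
  shows "V t i \<le> W t i"
  by (rule nimfa_comparison[OF adj tau nimfa_solutionD[OF V] nimfa_solutionD[OF W] V_cube W_cube])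
     (use init t in auto)

lemma nimfa_solution_shift:
  assumes V: "nimfa_solution A \<tau> V" and h: "h \<ge> 0"
  shows "nimfa_solution A \<tau> (\<lambda>s. V (s + h))"
  unfolding nimfa_solution_def
proof (intro allI impI)
  fix t :: real and i assume t: "0 \<le> t"
  show "((\<lambda>s. V (s + h) i) has_real_derivative nimfa_rhs A \<tau> (V (t + h)) i) (at t within {0..})"
  proof (cases "t + h > 0")
    case True
    have "((\<lambda>s. V s i) has_real_derivative nimfa_rhs A \<tau> (V (t + h)) i) (at (t + h))"
      using nimfa_solutionD[OF V, of "t + h" i] True by (intro has_real_derivative_within_atLeast_at) auto
    moreover have "((\<lambda>s. s + h) has_real_derivative 1) (at t within {0..})"
      by (auto intro!: derivative_eq_intros)
    ultimately show ?thesis using DERIV_chain2 by fastforce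
  next
    case False
    then have "h = 0" "t = 0" using h t by auto
    then show ?thesis using nimfa_solutionD[OF V, of 0 i] by simp
  qed
qed

section \<open>The largest eigenvalue as a Rayleigh quotient\<close>

definition mat_vec :: "('n::finite \<Rightarrow> 'n \<Rightarrow> real) \<Rightarrow> ('n \<Rightarrow> real) \<Rightarrow> 'n \<Rightarrow> real" where
  "mat_vec A x i = (\<Sum>j\<in>UNIV. A i j * x j)"

definition quad_form :: "('n::finite \<Rightarrow> 'n \<Rightarrow> real) \<Rightarrow> ('n \<Rightarrow> real) \<Rightarrow> real" where
  "quad_form A x = (\<Sum>i\<in>UNIV. x i * mat_vec A x i)"

definition sum_sq :: "('n::finite \<Rightarrow> real) \<Rightarrow> real" where
  "sum_sq x = (\<Sum>i\<in>UNIV. (x i)\<^sup>2)"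

lemma sum_sq_nonneg: "sum_sq x \<ge> 0"
  unfolding sum_sq_def by (simp add: sum_nonneg)

lemma sum_sq_scale: "sum_sq (\<lambda>i. a * x i) = a\<^sup>2 * sum_sq x"
  unfolding sum_sq_def by (simp add: sum_distrib_left power2_eq_square algebra_simps)

lemma quad_form_scale: "quad_form A (\<lambda>i. a * x i) = a\<^sup>2 * quad_form A x"
  unfolding quad_form_def mat_vec_def by (simp add: sum_distrib_left power2_eq_square algebra_simps)

lemma sum_mult_mat_vec_commute:
  fixes A :: "'n::finite \<Rightarrow> 'n \<Rightarrow> real"
  assumes sym: "\<And>i j. A i j = A j i"
  shows "(\<Sum>i\<in>UNIV. x i * mat_vec A w i) = (\<Sum>i\<in>UNIV. w i * mat_vec A x i)"
proof -
  have "(\<Sum>i\<in>UNIV. x i * mat_vec A w i) = (\<Sum>i\<in>UNIV. \<Sum>j\<in>UNIV. x i * A i j * w j)"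
    unfolding mat_vec_def by (simp add: sum_distrib_left mult.assoc)
  also have "\<dots> = (\<Sum>j\<in>UNIV. \<Sum>i\<in>UNIV. x i * A i j * w j)" by (rule sum.swap)
  also have "\<dots> = (\<Sum>j\<in>UNIV. w j * mat_vec A x j)"
    unfolding mat_vec_def by (simp add: sum_distrib_left sym mult.commute mult.left_commute)
  finally show ?thesis .
qed

lemma quad_form_add_scaled:
  fixes A :: "'n::finite \<Rightarrow> 'n \<Rightarrow> real"
  assumes sym: "\<And>i j. A i j = A j i"
  shows "quad_form A (\<lambda>i. x i + s * w i)
           = quad_form A x + 2 * s * (\<Sum>i\<in>UNIV. w i * mat_vec A x i) + s\<^sup>2 * quad_form A w"
proof -
  have "mat_vec A (\<lambda>i. x i + s * w i) i = mat_vec A x i + s * mat_vec A w i" for i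
    unfolding mat_vec_def by (simp add: sum.distrib sum_distrib_left algebra_simps)
  then have "quad_form A (\<lambda>i. x i + s * w i) = (\<Sum>i\<in>UNIV. x i * mat_vec A x i)
      + s * (\<Sum>i\<in>UNIV. x i * mat_vec A w i) + s * (\<Sum>i\<in>UNIV. w i * mat_vec A x i)
      + s\<^sup>2 * (\<Sum>i\<in>UNIV. w i * mat_vec A w i)"
    unfolding quad_form_def by (simp add: sum.distrib sum_distrib_left algebra_simps power2_eq_square)
  then show ?thesis unfolding sum_mult_mat_vec_commute[OF sym, where x=x and w=w] quad_form_def by simp
qed

lemma sum_sq_add_scaled:
  "sum_sq (\<lambda>i. x i + s * w i) = sum_sq x + 2 * s * (\<Sum>i\<in>UNIV. w i * x i) + s\<^sup>2 * sum_sq w"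
  unfolding sum_sq_def by (simp add: sum.distrib sum_distrib_left algebra_simps power2_eq_square)

text \<open>First-order condition: along \<open>x + s w\<close> with \<open>w = A x - \<mu> x\<close> the Rayleigh defect is
  \<open>2 s \<parallel>w\<parallel>\<^sup>2 + O(s\<^sup>2)\<close>, which is positive for small \<open>s > 0\<close> unless \<open>w = 0\<close>.\<close>

lemma rayleigh_maximizer_eigenvector:
  fixes A :: "'n::finite \<Rightarrow> 'n \<Rightarrow> real"
  assumes sym: "\<And>i j. A i j = A j i"
    and le: "\<And>y. quad_form A y \<le> \<mu> * sum_sq y" and eq: "quad_form A x = \<mu> * sum_sq x"
  shows "mat_vec A x i = \<mu> * x i"
proof -
  define w where "w i = mat_vec A x i - \<mu> * x i" for i
  define c where "c = quad_form A w - \<mu> * sum_sq w"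
  have defect: "2 * s * sum_sq w + s\<^sup>2 * c \<le> 0" for s
  proof -
    define P where "P = (\<Sum>i\<in>UNIV. w i * mat_vec A x i)"
    define Q where "Q = (\<Sum>i\<in>UNIV. w i * x i)"
    have h: "quad_form A x + 2 * s * P + s\<^sup>2 * quad_form A w \<le> \<mu> * (sum_sq x + 2 * s * Q + s\<^sup>2 * sum_sq w)"
      using le[of "\<lambda>i. x i + s * w i"] unfolding quad_form_add_scaled[OF sym] sum_sq_add_scaled P_def Q_def .
    have "P - \<mu> * Q = sum_sq w"
      unfolding sum_sq_def w_def P_def Q_def
      by (simp add: sum_distrib_left sum_subtractf[symmetric] power2_eq_square algebra_simps)
    then show ?thesis using h eq unfolding c_def by (simp add: algebra_simps)
  qed
  have "sum_sq w \<le> 0"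
  proof (rule ccontr)
    assume "\<not> sum_sq w \<le> 0"
    then have W: "sum_sq w > 0" by simp
    define s where "s = sum_sq w / (\<bar>c\<bar> + 1)"
    have s: "s > 0" unfolding s_def using W by simp
    have "s * \<bar>c\<bar> < sum_sq w" unfolding s_def using W by (simp add: field_simps)
    then have "s * (s * \<bar>c\<bar>) < s * sum_sq w" using s by (rule mult_strict_left_mono)
    moreover have "s\<^sup>2 * (- \<bar>c\<bar>) \<le> s\<^sup>2 * c" by (rule mult_left_mono) auto
    then have "- (s * (s * \<bar>c\<bar>)) \<le> s\<^sup>2 * c" by (simp add: power2_eq_square)
    moreover have "s * sum_sq w > 0" using s W by simp
    ultimately have "2 * s * sum_sq w + s\<^sup>2 * c > 0" by linarith
    with defect[of s] show False by simp
  qed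
  then have "w i = 0" unfolding sum_sq_def by (rule sum_squares_nonpos_imp_zero)
  then show ?thesis unfolding w_def by simp
qed

lemma quad_form_attains_max_on_unit_sphere:
  fixes A :: "'n::finite \<Rightarrow> 'n \<Rightarrow> real"
  obtains x where "sum_sq x = 1" "\<And>y. sum_sq y = 1 \<Longrightarrow> quad_form A y \<le> quad_form A x"
proof -
  have norm_sq: "(norm v)\<^sup>2 = sum_sq (\<lambda>i. v $ i)" for v :: "real ^ 'n"
    unfolding norm_vec_def L2_set_def sum_sq_def by (simp add: sum_nonneg)
  have cont: "continuous_on (sphere 0 1) (\<lambda>v::real ^ 'n. quad_form A (\<lambda>i. v $ i))"
    unfolding quad_form_def mat_vec_def by (intro continuous_intros)
  obtain v0 :: "real ^ 'n" where v0: "v0 \<in> sphere 0 1"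
    and max: "\<forall>v\<in>sphere 0 1. quad_form A (\<lambda>i. v $ i) \<le> quad_form A (\<lambda>i. v0 $ i)"
    using continuous_attains_sup[OF compact_sphere _ cont] by auto
  show ?thesis
  proof (rule that)
    show "sum_sq (\<lambda>i. v0 $ i) = 1" using v0 norm_sq[of v0] by simp
    fix y :: "'n \<Rightarrow> real" assume y: "sum_sq y = 1"
    have "(norm (\<chi> i. y i))\<^sup>2 = 1\<^sup>2" using y norm_sq[of "\<chi> i. y i"] by simp
    then have "(\<chi> i. y i) \<in> sphere (0::real ^ 'n) 1"
      using power2_eq_imp_eq[of "norm (\<chi> i. y i)" 1] by simp
    from max[rule_format, OF this] show "quad_form A y \<le> quad_form A (\<lambda>i. v0 $ i)"
      by (simp add: vec_lambda_inverse)
  qed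
qed

lemma quad_form_le_max_sum_sq:
  fixes A :: "'n::finite \<Rightarrow> 'n \<Rightarrow> real"
  obtains x where "sum_sq x = 1" "\<And>y. quad_form A y \<le> quad_form A x * sum_sq y"
proof -
  obtain x where x: "sum_sq x = 1" and max: "\<And>y. sum_sq y = 1 \<Longrightarrow> quad_form A y \<le> quad_form A x"
    using quad_form_attains_max_on_unit_sphere[of A] by blast
  have "quad_form A y \<le> quad_form A x * sum_sq y" for y
  proof (cases "sum_sq y = 0")
    case True
    then have "y i = 0" for i unfolding sum_sq_def by (intro sum_squares_nonpos_imp_zero) simp
    then have "y = (\<lambda>i. 0)" by auto
    then show ?thesis unfolding quad_form_def sum_sq_def by simp
  next
    case False
    then have pos: "sum_sq y > 0" using sum_sq_nonneg[of y] by simp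
    define c where "c = sqrt (sum_sq y)"
    have c: "c > 0" "c\<^sup>2 = sum_sq y" unfolding c_def using pos by auto
    have "sum_sq (\<lambda>i. (1/c) * y i) = 1" unfolding sum_sq_scale using c pos by (simp add: power_divide)
    then have "quad_form A (\<lambda>i. (1/c) * y i) \<le> quad_form A x" by (rule max)
    then have "quad_form A y / c\<^sup>2 \<le> quad_form A x" unfolding quad_form_scale by (simp add: power_divide)
    then show ?thesis using c pos by (simp add: divide_le_eq mult.commute)
  qed
  then show thesis using that x by blast
qed

text \<open>Eigenvectors of a symmetric matrix for distinct eigenvalues are orthogonal, hence linearly
  independent in \<open>\<real>\<^sup>N\<close>. Finiteness is what makes the \<open>Max\<close> in \<open>lambda1\<close> meaningful.\<close>

lemma finite_eigenvalues_symmetric: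
  fixes A :: "'n::finite \<Rightarrow> 'n \<Rightarrow> real"
  assumes sym: "\<And>i j. A i j = A j i"
  shows "finite {l. is_eigenvalue A l}"
proof -
  define E where "E = {l. is_eigenvalue A l}"
  define ev where "ev l = (SOME v. v \<noteq> (\<lambda>_. 0) \<and> (\<forall>i. mat_vec A v i = l * v i))" for l
  have ev: "ev l \<noteq> (\<lambda>_. 0) \<and> (\<forall>i. mat_vec A (ev l) i = l * ev l i)" if "l \<in> E" for l
  proof -
    have "\<exists>v. v \<noteq> (\<lambda>_. 0) \<and> (\<forall>i. mat_vec A v i = l * v i)"
      using that unfolding E_def is_eigenvalue_def mat_vec_def by blast
    then show ?thesis unfolding ev_def by (rule someI_ex)
  qed
  define evv where "evv l = (\<chi> i. ev l i)" for l
  have inner: "evv l \<bullet> evv m = (\<Sum>i\<in>UNIV. ev l i * ev m i)" for l m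
    unfolding evv_def inner_vec_def by simp
  have orth: "evv l \<bullet> evv m = 0" if "l \<in> E" "m \<in> E" "l \<noteq> m" for l m
  proof -
    have "l * (\<Sum>i\<in>UNIV. ev l i * ev m i) = (\<Sum>i\<in>UNIV. ev m i * mat_vec A (ev l) i)"
      using ev[OF that(1)] by (simp add: sum_distrib_left algebra_simps)
    also have "\<dots> = (\<Sum>i\<in>UNIV. ev l i * mat_vec A (ev m) i)"
      by (rule sum_mult_mat_vec_commute[OF sym, symmetric])
    also have "\<dots> = m * (\<Sum>i\<in>UNIV. ev l i * ev m i)"
      using ev[OF that(2)] by (simp add: sum_distrib_left algebra_simps)
    finally show ?thesis using that(3) inner by simp
  qed
  have nonzero: "evv l \<noteq> 0" if "l \<in> E" for l
  proof
    assume "evv l = 0"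
    then have "ev l i = 0" for i unfolding evv_def by (metis vec_lambda_beta zero_index)
    with ev[OF that] show False by auto
  qed
  have "inj_on evv E"
  proof (rule inj_onI, rule ccontr)
    fix l m assume lm: "l \<in> E" "m \<in> E" "evv l = evv m" "l \<noteq> m"
    then have "evv l \<bullet> evv l = 0" using orth by metis
    with nonzero[OF lm(1)] show False by simp
  qed
  moreover have "independent (evv ` E)"
    using orth nonzero by (intro pairwise_orthogonal_independent) (auto simp: pairwise_def orthogonal_def)
  then have "finite (evv ` E)" by (rule independent_imp_finite)
  ultimately show ?thesis unfolding E_def[symmetric] by (rule finite_imageD[rotated])
qed

text \<open>The Rayleigh maximiser may be replaced by its absolute value since \<open>A\<close> is nonnegative;
  this yields a nonnegative (Perron) eigenvector.\<close>

lemma lambda1_rayleigh: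
  fixes A :: "'n::finite \<Rightarrow> 'n \<Rightarrow> real"
  assumes adj: "adjacency_matrix A"
  obtains x where "\<forall>i. 0 \<le> x i" "sum_sq x = 1" "\<forall>i. mat_vec A x i = lambda1 A * x i"
    "\<forall>y. quad_form A y \<le> lambda1 A * sum_sq y"
proof -
  note sym = adjacency_matrixD(3)[OF adj] and nonneg = adjacency_matrixD(1)[OF adj]
  obtain x where x: "sum_sq x = 1" and le: "\<And>y. quad_form A y \<le> quad_form A x * sum_sq y"
    using quad_form_le_max_sum_sq[of A] by blast
  define \<mu> where "\<mu> = quad_form A x"
  define ax where "ax i = \<bar>x i\<bar>" for i
  have ax: "sum_sq ax = 1" using x unfolding sum_sq_def ax_def by simp
  have le': "\<And>y. quad_form A y \<le> \<mu> * sum_sq y" using le unfolding \<mu>_def by (simp add: mult.commute)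
  have "quad_form A x = (\<Sum>i\<in>UNIV. \<Sum>j\<in>UNIV. x i * A i j * x j)"
    unfolding quad_form_def mat_vec_def by (simp add: sum_distrib_left mult.assoc)
  also have "\<dots> \<le> (\<Sum>i\<in>UNIV. \<Sum>j\<in>UNIV. ax i * A i j * ax j)"
    unfolding ax_def using nonneg by (intro sum_mono) (metis abs_ge_self abs_mult abs_of_nonneg)
  also have "\<dots> = quad_form A ax"
    unfolding quad_form_def mat_vec_def by (simp add: sum_distrib_left mult.assoc)
  finally have "quad_form A ax = \<mu> * sum_sq ax" using le'[of ax] ax x unfolding \<mu>_def by simp
  then have eig: "mat_vec A ax i = \<mu> * ax i" for i by (rule rayleigh_maximizer_eigenvector[OF sym le'])
  have "ax \<noteq> (\<lambda>_. 0)" using ax unfolding sum_sq_def by auto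
  then have "is_eigenvalue A \<mu>" unfolding is_eigenvalue_def using eig unfolding mat_vec_def by blast
  moreover have "l \<le> \<mu>" if l: "is_eigenvalue A l" for l
  proof -
    obtain v where v: "v \<noteq> (\<lambda>_. 0)" "\<And>i. mat_vec A v i = l * v i"
      using l unfolding is_eigenvalue_def mat_vec_def by blast
    have "quad_form A v = l * sum_sq v"
      unfolding quad_form_def sum_sq_def v(2) by (simp add: sum_distrib_left power2_eq_square algebra_simps)
    moreover have "sum_sq v \<noteq> 0"
    proof
      assume "sum_sq v = 0"
      then have "v i = 0" for i unfolding sum_sq_def by (intro sum_squares_nonpos_imp_zero) simp
      with v(1) show False by auto
    qed
    then have "sum_sq v > 0" using sum_sq_nonneg[of v] by simp
    ultimately show ?thesis using le'[of v] by simp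
  qed
  ultimately have "lambda1 A = \<mu>"
    unfolding lambda1_def using finite_eigenvalues_symmetric[OF sym] by (intro Max_eqI) auto
  then show thesis using le' eig ax by (intro that[of ax]) (auto simp: ax_def)
qed

lemma quad_form_le_lambda1:
  fixes A :: "'n::finite \<Rightarrow> 'n \<Rightarrow> real"
  assumes "adjacency_matrix A"
  shows "quad_form A y \<le> lambda1 A * sum_sq y"
proof -
  obtain x where "\<forall>i. 0 \<le> x i" "sum_sq x = 1" "\<forall>i. mat_vec A x i = lambda1 A * x i"
    and "\<forall>y. quad_form A y \<le> lambda1 A * sum_sq y"
    by (rule lambda1_rayleigh[OF assms])
  then show ?thesis by blast
qed

lemma nimfa_equilibrium_pos_connected:
  fixes A :: "'n::finite \<Rightarrow> 'n \<Rightarrow> real"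
  assumes adj: "adjacency_matrix A" and conn: "connected_graph A" and tau: "\<tau> > 0"
    and v: "\<And>j. 0 \<le> v j" "\<And>j. nimfa_rhs A \<tau> v j = 0" and vk: "v k > 0"
  shows "v j > 0"
proof -
  have "(\<lambda>x y. A x y = 1)\<^sup>*\<^sup>* k j" using conn unfolding connected_graph_def by blast
  then show ?thesis
  proof (induction rule: rtranclp_induct)
    case base
    show ?case using vk .
  next
    case (step y z)
    have "A z y * v y \<le> (\<Sum>j\<in>UNIV. A z j * v j)"
      by (rule member_le_sum[where f="\<lambda>j. A z j * v j"]) (use adjacency_matrixD(1)[OF adj] v in auto)
    moreover have "A z y = 1" using step(2) adjacency_matrixD(3)[OF adj] by simp
    ultimately have infected_neighbour: "(\<Sum>j\<in>UNIV. A z j * v j) > 0" using step(3) by simp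
    show ?case
    proof (rule ccontr)
      assume "\<not> 0 < v z"
      then have "v z = 0" using v(1)[of z] by simp
      then have "nimfa_rhs A \<tau> v z = \<tau> * (\<Sum>j\<in>UNIV. A z j * v j)" unfolding nimfa_rhs_def by simp
      with infected_neighbour tau v(2)[of z] show False by simp
    qed
  qed
qed

text \<open>Let \<open>\<alpha> = min\<^sub>j v\<^sub>j / w\<^sub>j\<close>, attained at \<open>k\<close>. Then \<open>\<alpha> w \<le> v\<close> with equality at \<open>k\<close>, and comparing the
  equilibrium equations at \<open>k\<close> gives \<open>1 - w\<^sub>k \<ge> 1 - \<alpha> w\<^sub>k\<close>, i.e. \<open>\<alpha> \<ge> 1\<close>.\<close>

lemma nimfa_positive_equilibrium_le:
  fixes A :: "'n::finite \<Rightarrow> 'n \<Rightarrow> real"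
  assumes adj: "adjacency_matrix A" and tau: "\<tau> > 0"
    and v: "\<And>j. 0 < v j" "\<And>j. v j \<le> 1" "\<And>j. nimfa_rhs A \<tau> v j = 0"
    and w: "\<And>j. 0 < w j" "\<And>j. w j \<le> 1" "\<And>j. nimfa_rhs A \<tau> w j = 0"
  shows "w j \<le> v j"
proof -
  have "Min (range (\<lambda>j. v j / w j)) \<in> range (\<lambda>j. v j / w j)" by (rule Min_in) auto
  then obtain k where k: "Min (range (\<lambda>j. v j / w j)) = v k / w k" by blast
  define \<alpha> where "\<alpha> = v k / w k"
  have \<alpha>_pos: "\<alpha> > 0" unfolding \<alpha>_def using v(1) w(1) by simp
  have below: "\<alpha> * w j \<le> v j" for j
    using Min_le[of "range (\<lambda>j. v j / w j)" "v j / w j"] w(1)[of j]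
    unfolding \<alpha>_def k[symmetric] by (simp add: le_divide_eq)
  have touch: "v k = \<alpha> * w k" unfolding \<alpha>_def using w(1)[of k] by simp
  define Sv where "Sv = (\<Sum>j\<in>UNIV. A k j * v j)"
  define Sw where "Sw = (\<Sum>j\<in>UNIV. A k j * w j)"
  have "\<alpha> * Sw \<le> Sv" unfolding Sv_def Sw_def sum_distrib_left
  proof (intro sum_mono)
    fix j
    have "A k j * (\<alpha> * w j) \<le> A k j * v j"
      using below[of j] adjacency_matrixD(1)[OF adj, of k j] by (rule mult_left_mono)
    then show "\<alpha> * (A k j * w j) \<le> A k j * v j" by (simp add: algebra_simps)
  qed
  then have "\<tau> * (1 - v k) * (\<alpha> * Sw) \<le> \<tau> * (1 - v k) * Sv"
    using tau v(2)[of k] by (intro mult_left_mono) auto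
  moreover have "v k = \<tau> * (1 - v k) * Sv" using v(3)[of k] unfolding nimfa_rhs_def Sv_def by simp
  ultimately have "\<tau> * (1 - v k) * (\<alpha> * Sw) \<le> v k" by linarith
  moreover have ew: "w k = \<tau> * (1 - w k) * Sw" using w(3)[of k] unfolding nimfa_rhs_def Sw_def by simp
  then have "w k < 1" using w(1)[of k] w(2)[of k] by (cases "w k = 1") auto
  ultimately have "\<tau> * (1 - v k) * (\<alpha> * Sw) * (1 - w k) \<le> v k * (1 - w k)"
    by (intro mult_right_mono) auto
  then have "v k * (1 - w k) \<ge> (1 - v k) * \<alpha> * (\<tau> * (1 - w k) * Sw)"
    by (simp add: mult_ac)
  then have "(\<alpha> * w k) * (1 - w k) \<ge> (\<alpha> * w k) * (1 - \<alpha> * w k)"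
    unfolding ew[symmetric] touch by (simp add: algebra_simps)
  then have "1 - w k \<ge> 1 - \<alpha> * w k" using \<alpha>_pos w(1)[of k] by (simp add: mult_le_cancel_left_pos)
  then have "\<alpha> \<ge> 1" using w(1)[of k] by simp
  then have "w j \<le> \<alpha> * w j" using mult_right_mono[of 1 \<alpha> "w j"] w(1)[of j] by simp
  then show ?thesis using below[of j] by linarith
qed

lemma endemic_equilibrium_eqI:
  fixes A :: "'n::finite \<Rightarrow> 'n \<Rightarrow> real"
  assumes adj: "adjacency_matrix A" and tau: "\<tau> > 0"
    and e: "\<And>i. 0 < e i \<and> e i \<le> 1" "\<And>i. nimfa_rhs A \<tau> e i = 0"
  shows "endemic_equilibrium A \<tau> = e"
  unfolding endemic_equilibrium_def
proof (rule the_equality)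
  show "(\<forall>i. 0 < e i \<and> e i \<le> 1) \<and> (\<forall>i. nimfa_rhs A \<tau> e i = 0)" using e by blast
  fix v assume v: "(\<forall>i. 0 < v i \<and> v i \<le> 1) \<and> (\<forall>i. nimfa_rhs A \<tau> v i = 0)"
  have "v j \<le> e j" "e j \<le> v j" for j
    by (rule nimfa_positive_equilibrium_le[OF adj tau]; use e v in auto)+
  then show "v = e" by (auto simp: fun_eq_iff intro: antisym)
qed

lemma nimfa_limit_is_equilibrium:
  assumes V: "nimfa_solution A \<tau> V" and lim: "\<And>j. ((\<lambda>t. V t j) \<longlongrightarrow> l j) at_top"
  shows "nimfa_rhs A \<tau> l i = 0"
proof -
  have "\<exists>z. real n < z \<and> V (real n + 2) i - V (real n + 1) i = nimfa_rhs A \<tau> (V z) i" for n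
  proof -
    have "\<exists>z. real n + 1 < z \<and> z < real n + 2 \<and>
        V (real n + 2) i - V (real n + 1) i = (real n + 2 - (real n + 1)) * nimfa_rhs A \<tau> (V z) i"
      by (rule MVT2) (auto intro!: has_real_derivative_within_atLeast_at nimfa_solutionD[OF V])
    then obtain z where "real n + 1 < z"
      "V (real n + 2) i - V (real n + 1) i = (real n + 2 - (real n + 1)) * nimfa_rhs A \<tau> (V z) i"
      by blast
    then show ?thesis by (intro exI[of _ z]) simp
  qed
  then obtain \<xi> where \<xi>: "\<And>n. real n < \<xi> n"
    "\<And>n. V (real n + 2) i - V (real n + 1) i = nimfa_rhs A \<tau> (V (\<xi> n)) i"
    using choice[of "\<lambda>n z. real n < z \<and> V (real n + 2) i - V (real n + 1) i = nimfa_rhs A \<tau> (V z) i"]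
    by blast
  have "filterlim \<xi> at_top sequentially"
    by (rule filterlim_at_top_mono[OF filterlim_real_sequentially]) (use \<xi>(1) in \<open>auto intro!: always_eventually less_imp_le\<close>)
  then have to_rhs: "(\<lambda>n. nimfa_rhs A \<tau> (V (\<xi> n)) i) \<longlonglongrightarrow> nimfa_rhs A \<tau> l i"
    unfolding nimfa_rhs_def by (intro tendsto_intros filterlim_compose[OF lim])
  have "filterlim (\<lambda>n. real n + c) at_top sequentially" for c :: real
    by (subst add.commute) (rule filterlim_tendsto_add_at_top[OF tendsto_const filterlim_real_sequentially])
  then have "(\<lambda>n. V (real n + 2) i - V (real n + 1) i) \<longlonglongrightarrow> l i - l i"
    by (intro tendsto_intros filterlim_compose[OF lim])
  then have "(\<lambda>n. nimfa_rhs A \<tau> (V (\<xi> n)) i) \<longlonglongrightarrow> 0" unfolding \<xi>(2) by simp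
  from LIMSEQ_unique[OF to_rhs this] show ?thesis .
qed

lemma nimfa_rhs_scaled_eigenvector_nonneg:
  fixes A :: "'n::finite \<Rightarrow> 'n \<Rightarrow> real"
  assumes eig: "\<And>j. mat_vec A x j = lambda1 A * x j" and R: "R0 A \<tau> > 1"
    and x: "0 \<le> \<epsilon> * x i" "\<epsilon> * x i \<le> (R0 A \<tau> - 1) / R0 A \<tau>"
  shows "0 \<le> nimfa_rhs A \<tau> (\<lambda>j. \<epsilon> * x j) i"
proof -
  have "(\<Sum>j\<in>UNIV. A i j * (\<epsilon> * x j)) = \<epsilon> * mat_vec A x i"
    unfolding mat_vec_def by (simp add: sum_distrib_left algebra_simps)
  then have "(\<Sum>j\<in>UNIV. A i j * (\<epsilon> * x j)) = \<epsilon> * (lambda1 A * x i)" using eig[of i] by simp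
  then have rhs: "nimfa_rhs A \<tau> (\<lambda>j. \<epsilon> * x j) i = \<epsilon> * x i * (R0 A \<tau> * (1 - \<epsilon> * x i) - 1)"
    unfolding nimfa_rhs_def R0_def by (simp add: algebra_simps)
  have "R0 A \<tau> * (\<epsilon> * x i) \<le> R0 A \<tau> - 1" using x(2) R by (simp add: le_divide_eq mult.commute)
  then have "R0 A \<tau> * (1 - \<epsilon> * x i) - 1 \<ge> 0" by (simp add: algebra_simps)
  then show ?thesis unfolding rhs using x(1) by simp
qed

lemma nimfa_solution_above_subequilibrium:
  fixes A :: "'n::finite \<Rightarrow> 'n \<Rightarrow> real"
  assumes adj: "adjacency_matrix A" and tau: "\<tau> \<ge> 0"
    and V: "nimfa_solution A \<tau> V" and V_cube: "\<And>s i. 0 \<le> s \<Longrightarrow> 0 \<le> V s i \<and> V s i \<le> 1"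
    and v: "\<And>i. 0 \<le> v i" "\<And>i. v i \<le> 1" "\<And>i. 0 \<le> nimfa_rhs A \<tau> v i"
    and init: "\<And>i. v i \<le> V 0 i" and t: "0 \<le> t"
  shows "v i \<le> V t i"
proof -
  have "(\<lambda>s. v) t i \<le> V t i"
    by (rule nimfa_comparison[OF adj tau _ nimfa_solutionD[OF V], where dX="\<lambda>s i. 0"])
       (use V_cube v init t in auto)
  then show ?thesis by simp
qed

lemma nimfa_solution_mono_if_initial_le:
  fixes A :: "'n::finite \<Rightarrow> 'n \<Rightarrow> real"
  assumes adj: "adjacency_matrix A" and tau: "\<tau> \<ge> 0"
    and V: "nimfa_solution A \<tau> V" and V_cube: "\<And>s i. 0 \<le> s \<Longrightarrow> 0 \<le> V s i \<and> V s i \<le> 1"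
    and up: "\<And>h i. 0 \<le> h \<Longrightarrow> V 0 i \<le> V h i" and st: "0 \<le> s" "s \<le> t"
  shows "V s i \<le> V t i"
proof -
  have "V s i \<le> V (s + (t - s)) i"
    by (rule nimfa_solution_comparison[OF adj tau V nimfa_solution_shift[OF V]])
       (use V_cube up st in auto)
  then show ?thesis by simp
qed

lemma nimfa_solution_antimono_if_initial_ge:
  fixes A :: "'n::finite \<Rightarrow> 'n \<Rightarrow> real"
  assumes adj: "adjacency_matrix A" and tau: "\<tau> \<ge> 0"
    and V: "nimfa_solution A \<tau> V" and V_cube: "\<And>s i. 0 \<le> s \<Longrightarrow> 0 \<le> V s i \<and> V s i \<le> 1"
    and down: "\<And>h i. 0 \<le> h \<Longrightarrow> V h i \<le> V 0 i" and st: "0 \<le> s" "s \<le> t"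
  shows "V t i \<le> V s i"
proof -
  have "V (s + (t - s)) i \<le> V s i"
    by (rule nimfa_solution_comparison[OF adj tau nimfa_solution_shift[OF V] V])
       (use V_cube down st in auto)
  then show ?thesis by simp
qed

lemma nimfa_small_subequilibrium:
  fixes A :: "'n::finite \<Rightarrow> 'n \<Rightarrow> real"
  assumes adj: "adjacency_matrix A" and R: "R0 A \<tau> > 1" and r: "0 < r"
  obtains v k where "\<forall>i. 0 \<le> v i \<and> v i \<le> r \<and> v i \<le> 1" "0 < v k" "\<forall>i. 0 \<le> nimfa_rhs A \<tau> v i"
proof -
  obtain x where x: "\<forall>i. 0 \<le> x i" "sum_sq x = 1" "\<forall>i. mat_vec A x i = lambda1 A * x i"
    "\<forall>y. quad_form A y \<le> lambda1 A * sum_sq y"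
    by (rule lambda1_rayleigh[OF adj])
  note x_nonneg = x(1)[rule_format] and x_eig = x(3)[rule_format]
  have x_le_1: "x i \<le> 1" for i
  proof -
    have "(x i)\<^sup>2 \<le> 1\<^sup>2" using member_le_sum[of i UNIV "\<lambda>i. (x i)\<^sup>2"] x(2) unfolding sum_sq_def by simp
    then show ?thesis by (rule power2_le_imp_le) simp
  qed
  obtain k where x_k: "x k > 0"
  proof -
    have "x \<noteq> (\<lambda>_. 0)" using x(2) unfolding sum_sq_def by auto
    then obtain k where "x k \<noteq> 0" by auto
    then show thesis using x_nonneg[of k] by (intro that[of k]) simp
  qed
  define \<epsilon> where "\<epsilon> = min r ((R0 A \<tau> - 1) / R0 A \<tau>)"
  have \<epsilon>: "0 < \<epsilon>" "\<epsilon> \<le> r" "\<epsilon> \<le> (R0 A \<tau> - 1) / R0 A \<tau>" "(R0 A \<tau> - 1) / R0 A \<tau> \<le> 1"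
    unfolding \<epsilon>_def using r R by auto
  define v where "v i = \<epsilon> * x i" for i
  have v: "0 \<le> v i" "v i \<le> \<epsilon>" for i
    unfolding v_def using \<epsilon> x_nonneg[of i] x_le_1[of i] by (auto simp: mult_left_le)
  have "0 \<le> nimfa_rhs A \<tau> v i" for i
  proof -
    have "v i \<le> (R0 A \<tau> - 1) / R0 A \<tau>" using v(2)[of i] \<epsilon>(3) by linarith
    then show ?thesis unfolding v_def
      by (rule nimfa_rhs_scaled_eigenvector_nonneg[OF x_eig R, rotated]) (use v(1)[of i] in \<open>simp only: v_def\<close>)
  qed
  moreover have "0 \<le> v i \<and> v i \<le> r \<and> v i \<le> 1" for i using v[of i] \<epsilon> by linarith
  moreover have "0 < v k" unfolding v_def using x_k \<epsilon>(1) by simp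
  ultimately show thesis by (intro that) auto
qed

lemma nimfa_mono_solution_tendsto_equilibrium:
  assumes V: "nimfa_solution A \<tau> V" and V_cube: "\<And>s i. 0 \<le> s \<Longrightarrow> 0 \<le> V s i \<and> V s i \<le> 1"
    and mono: "\<And>s t i. 0 \<le> s \<Longrightarrow> s \<le> t \<Longrightarrow> V s i \<le> V t i"
  obtains l where "\<forall>i. ((\<lambda>t. V t i) \<longlongrightarrow> l i) at_top" "\<forall>i. nimfa_rhs A \<tau> l i = 0"
proof -
  have "\<exists>l. ((\<lambda>t. V t i) \<longlongrightarrow> l) at_top" for i
  proof -
    obtain l where "((\<lambda>t. V t i) \<longlongrightarrow> l) at_top"
      by (rule bounded_mono_tendsto_at_top[of "\<lambda>t. V t i" 1]) (use mono V_cube in auto)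
    then show ?thesis ..
  qed
  then obtain l where l: "\<And>i. ((\<lambda>t. V t i) \<longlongrightarrow> l i) at_top"
    using choice[of "\<lambda>i l. ((\<lambda>t. V t i) \<longlongrightarrow> l) at_top"] by blast
  with nimfa_limit_is_equilibrium[OF V l] show thesis by (intro that) auto
qed

lemma nimfa_antimono_solution_tendsto_equilibrium:
  assumes V: "nimfa_solution A \<tau> V" and V_cube: "\<And>s i. 0 \<le> s \<Longrightarrow> 0 \<le> V s i \<and> V s i \<le> 1"
    and antimono: "\<And>s t i. 0 \<le> s \<Longrightarrow> s \<le> t \<Longrightarrow> V t i \<le> V s i"
  obtains l where "\<forall>i. ((\<lambda>t. V t i) \<longlongrightarrow> l i) at_top" "\<forall>i. nimfa_rhs A \<tau> l i = 0"
proof -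
  have "\<exists>l. ((\<lambda>t. V t i) \<longlongrightarrow> l) at_top" for i
  proof -
    obtain l where "((\<lambda>t. V t i) \<longlongrightarrow> l) at_top"
      by (rule bounded_antimono_tendsto_at_top[of "\<lambda>t. V t i" 0]) (use antimono V_cube in auto)
    then show ?thesis ..
  qed
  then obtain l where l: "\<And>i. ((\<lambda>t. V t i) \<longlongrightarrow> l i) at_top"
    using choice[of "\<lambda>i l. ((\<lambda>t. V t i) \<longlongrightarrow> l) at_top"] by blast
  with nimfa_limit_is_equilibrium[OF V l] show thesis by (intro that) auto
qed

section \<open>Convergence to the endemic equilibrium\<close>

lemma nimfa_endemic_sandwich:
  fixes A :: "'n::finite \<Rightarrow> 'n \<Rightarrow> real"
  assumes adj: "adjacency_matrix A" and conn: "connected_graph A"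
    and tau: "\<tau> > 0" and R: "R0 A \<tau> > 1" and r: "0 < r"
  obtains L U where "nimfa_solution A \<tau> L" "nimfa_solution A \<tau> U"
    "\<And>t i. 0 \<le> t \<Longrightarrow> 0 \<le> L t i \<and> L t i \<le> 1" "\<And>t i. 0 \<le> t \<Longrightarrow> 0 \<le> U t i \<and> U t i \<le> 1"
    "\<And>i. L 0 i \<le> r" "U 0 = (\<lambda>_. 1)"
    "\<And>i. ((\<lambda>t. L t i) \<longlongrightarrow> endemic_equilibrium A \<tau> i) at_top"
    "\<And>i. ((\<lambda>t. U t i) \<longlongrightarrow> endemic_equilibrium A \<tau> i) at_top"
proof -
  have tau0: "\<tau> \<ge> 0" using tau by simp
  obtain v k where v: "\<forall>i. 0 \<le> v i \<and> v i \<le> r \<and> v i \<le> 1" "0 < v k" "\<forall>i. 0 \<le> nimfa_rhs A \<tau> v i"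
    by (rule nimfa_small_subequilibrium[OF adj R r])
  obtain L where L: "nimfa_solution A \<tau> L" "L 0 = v"
    and L_cube: "\<And>t i. 0 \<le> t \<Longrightarrow> 0 \<le> L t i \<and> L t i \<le> 1"
    by (rule nimfa_solution_exists[OF adj tau0, of v]) (use v in auto)
  obtain U where U: "nimfa_solution A \<tau> U" "U 0 = (\<lambda>_. 1)"
    and U_cube: "\<And>t i. 0 \<le> t \<Longrightarrow> 0 \<le> U t i \<and> U t i \<le> 1"
    by (rule nimfa_solution_exists[OF adj tau0, of "\<lambda>_. 1"]) auto
  have L_above: "v i \<le> L t i" if "0 \<le> t" for t i
    by (rule nimfa_solution_above_subequilibrium[OF adj tau0 L(1) L_cube])
       (use v L(2) that in auto)
  have L_mono: "L s i \<le> L t i" if "0 \<le> s" "s \<le> t" for s t i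
    by (rule nimfa_solution_mono_if_initial_le[OF adj tau0 L(1) L_cube _ that]) (use L_above L(2) in auto)
  have U_anti: "U t i \<le> U s i" if "0 \<le> s" "s \<le> t" for s t i
    by (rule nimfa_solution_antimono_if_initial_ge[OF adj tau0 U(1) U_cube _ that]) (use U_cube U(2) in auto)
  have "L 0 i \<le> U 0 i" for i using L_cube[of 0 i] U(2) by simp
  then have L_le_U: "L t i \<le> U t i" if "0 \<le> t" for t i
    using nimfa_solution_comparison[OF adj tau0 L(1) U(1) L_cube U_cube _ that] by blast
  obtain lL where lL: "\<forall>i. ((\<lambda>t. L t i) \<longlongrightarrow> lL i) at_top" "\<forall>i. nimfa_rhs A \<tau> lL i = 0"
    by (rule nimfa_mono_solution_tendsto_equilibrium[OF L(1) L_cube L_mono])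
  obtain lU where lU: "\<forall>i. ((\<lambda>t. U t i) \<longlongrightarrow> lU i) at_top" "\<forall>i. nimfa_rhs A \<tau> lU i = 0"
    by (rule nimfa_antimono_solution_tendsto_equilibrium[OF U(1) U_cube U_anti])
  have bounds: "v i \<le> lL i" "lL i \<le> lU i" "lU i \<le> 1" for i
  proof -
    have ev: "\<forall>\<^sub>F t in at_top. v i \<le> L t i \<and> L t i \<le> U t i \<and> U t i \<le> 1"
      using eventually_ge_at_top[of "0::real"] by eventually_elim (use L_above L_le_U U_cube in auto)
    show "v i \<le> lL i"
      by (rule tendsto_lowerbound[OF lL(1)[rule_format]]) (use ev in \<open>auto elim: eventually_mono\<close>)
    show "lL i \<le> lU i"
      by (rule tendsto_le[OF _ lU(1)[rule_format] lL(1)[rule_format]]) (use ev in \<open>auto elim: eventually_mono\<close>)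
    show "lU i \<le> 1"
      by (rule tendsto_upperbound[OF lU(1)[rule_format]]) (use ev in \<open>auto elim: eventually_mono\<close>)
  qed
  have lL_pos: "0 < lL i" for i
  proof (rule nimfa_equilibrium_pos_connected[OF adj conn tau _ lL(2)[rule_format]])
    show "0 \<le> lL j" for j using bounds(1)[of j] v(1) by (meson order_trans)
    show "0 < lL k" using bounds(1)[of k] v(2) by simp
  qed
  have "endemic_equilibrium A \<tau> = lL"
    using lL_pos bounds(2,3) lL(2) by (intro endemic_equilibrium_eqI[OF adj tau]) (smt (verit))+
  moreover have "endemic_equilibrium A \<tau> = lU"
    using lL_pos bounds(2,3) lU(2) by (intro endemic_equilibrium_eqI[OF adj tau]) (smt (verit))+
  ultimately show thesis
    by (intro that[OF L(1) U(1) L_cube U_cube _ U(2)]) (use L(2) v lL(1) lU(1) in auto)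
qed

lemma prevalence_mono: "(\<And>i. u i \<le> v i) \<Longrightarrow> prevalence u \<le> prevalence v"
  unfolding prevalence_def by (intro divide_right_mono sum_mono) auto

lemma tendsto_prevalence:
  "(\<And>i. ((\<lambda>t. f t i) \<longlongrightarrow> l i) F) \<Longrightarrow> ((\<lambda>t. prevalence (f t)) \<longlongrightarrow> prevalence l) F"
  unfolding prevalence_def by (intro tendsto_intros) auto

lemma y_inf_le_one:
  fixes A :: "'n::finite \<Rightarrow> 'n \<Rightarrow> real"
  assumes "adjacency_matrix A" "connected_graph A" "\<tau> > 0" "R0 A \<tau> > 1"
  shows "y_inf A \<tau> \<le> 1"
proof -
  obtain L U :: "real \<Rightarrow> 'n \<Rightarrow> real" where "nimfa_solution A \<tau> L" "nimfa_solution A \<tau> U"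
    and L_cube: "\<And>t i. 0 \<le> t \<Longrightarrow> 0 \<le> L t i \<and> L t i \<le> 1"
    and "\<And>t i. 0 \<le> t \<Longrightarrow> 0 \<le> U t i \<and> U t i \<le> 1" "\<And>i. L 0 i \<le> 1" "U 0 = (\<lambda>_. 1)"
    and lim: "\<And>i. ((\<lambda>t. L t i) \<longlongrightarrow> endemic_equilibrium A \<tau> i) at_top"
    and "\<And>i. ((\<lambda>t. U t i) \<longlongrightarrow> endemic_equilibrium A \<tau> i) at_top"
    by (fact nimfa_endemic_sandwich[OF assms zero_less_one])
  have "\<forall>\<^sub>F t in at_top. L t i \<le> 1" for i
    using eventually_ge_at_top[of "0::real"] by eventually_elim (use L_cube in auto)
  then have "endemic_equilibrium A \<tau> i \<le> 1" for i by (intro tendsto_upperbound[OF lim]) auto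
  then have "y_inf A \<tau> \<le> prevalence (\<lambda>_::'n. 1)" unfolding y_inf_def by (rule prevalence_mono)
  then show ?thesis by (simp add: prevalence_def)
qed

lemma nimfa_uniform_attraction:
  fixes A :: "'n::finite \<Rightarrow> 'n \<Rightarrow> real"
  assumes adj: "adjacency_matrix A" and conn: "connected_graph A"
    and tau: "\<tau> > 0" and R: "R0 A \<tau> > 1" and r: "0 < r" and \<delta>: "0 < \<delta>"
  shows "\<exists>t\<ge>0. \<forall>V. nimfa_solution A \<tau> V \<and> (\<forall>i. r \<le> V 0 i \<and> V 0 i \<le> 1) \<longrightarrow>
           \<bar>prevalence (V t) - y_inf A \<tau>\<bar> \<le> \<delta>"
proof -
  have tau0: "\<tau> \<ge> 0" using tau by simp
  obtain L U where L: "nimfa_solution A \<tau> L" and U: "nimfa_solution A \<tau> U"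
    and L_cube: "\<And>t i. 0 \<le> t \<Longrightarrow> 0 \<le> L t i \<and> L t i \<le> 1"
    and U_cube: "\<And>t i. 0 \<le> t \<Longrightarrow> 0 \<le> U t i \<and> U t i \<le> 1"
    and L0: "\<And>i. L 0 i \<le> r" and U0: "U 0 = (\<lambda>_. 1)"
    and "\<And>i. ((\<lambda>t. L t i) \<longlongrightarrow> endemic_equilibrium A \<tau> i) at_top"
    and "\<And>i. ((\<lambda>t. U t i) \<longlongrightarrow> endemic_equilibrium A \<tau> i) at_top"
    by (fact nimfa_endemic_sandwich[OF adj conn tau R r])
  then have lim_L: "((\<lambda>t. prevalence (L t)) \<longlongrightarrow> y_inf A \<tau>) at_top"
    and lim_U: "((\<lambda>t. prevalence (U t)) \<longlongrightarrow> y_inf A \<tau>) at_top"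
    unfolding y_inf_def by (blast intro: tendsto_prevalence)+
  have "\<forall>\<^sub>F t in at_top. 0 \<le> t \<and> dist (prevalence (L t)) (y_inf A \<tau>) < \<delta>
      \<and> dist (prevalence (U t)) (y_inf A \<tau>) < \<delta>"
    by (intro eventually_conj eventually_ge_at_top tendstoD[OF lim_L \<delta>] tendstoD[OF lim_U \<delta>])
  then obtain t where t: "0 \<le> t" "\<bar>prevalence (L t) - y_inf A \<tau>\<bar> < \<delta>" "\<bar>prevalence (U t) - y_inf A \<tau>\<bar> < \<delta>"
    unfolding eventually_at_top_linorder dist_real_def by blast
  show ?thesis
  proof (intro exI conjI allI impI)
    fix V assume V: "nimfa_solution A \<tau> V \<and> (\<forall>i. r \<le> V 0 i \<and> V 0 i \<le> 1)"
    have V_cube: "0 \<le> V s i \<and> V s i \<le> 1" if "0 \<le> s" for s i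
      by (rule nimfa_solution_in_unit_cube[OF adj tau0]) (use V r that in \<open>auto intro: order_trans[of 0 r]\<close>)
    have "prevalence (L t) \<le> prevalence (V t)"
      by (intro prevalence_mono nimfa_solution_comparison[OF adj tau0 L _ L_cube V_cube _ t(1)])
         (use V L0 in \<open>auto intro: order_trans\<close>)
    moreover have "prevalence (V t) \<le> prevalence (U t)"
      by (intro prevalence_mono nimfa_solution_comparison[OF adj tau0 _ U V_cube U_cube _ t(1)])
         (use V U0 in auto)
    ultimately show "\<bar>prevalence (V t) - y_inf A \<tau>\<bar> \<le> \<delta>" using t by linarith
  qed (use t in simp)
qed

section \<open>Growth from a small initial infection\<close>

lemma nimfa_rhs_energy_le:
  fixes A :: "'n::finite \<Rightarrow> 'n \<Rightarrow> real"
  assumes adj: "adjacency_matrix A" and tau: "\<tau> \<ge> 0" and v: "\<And>i. 0 \<le> v i"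
  shows "(\<Sum>i\<in>UNIV. 2 * v i * nimfa_rhs A \<tau> v i) \<le> 2 * (R0 A \<tau> - 1) * sum_sq v"
proof -
  have "v i * nimfa_rhs A \<tau> v i \<le> - (v i)\<^sup>2 + \<tau> * (v i * mat_vec A v i)" for i
  proof -
    have "0 \<le> mat_vec A v i"
      unfolding mat_vec_def using adjacency_matrixD(1)[OF adj] v by (intro sum_nonneg) auto
    then have "\<tau> * ((v i)\<^sup>2 * mat_vec A v i) \<ge> 0" using tau by simp
    then show ?thesis unfolding nimfa_rhs_def mat_vec_def[symmetric] by (simp add: algebra_simps power2_eq_square)
  qed
  then have "(\<Sum>i\<in>UNIV. v i * nimfa_rhs A \<tau> v i) \<le> (\<Sum>i\<in>UNIV. - (v i)\<^sup>2 + \<tau> * (v i * mat_vec A v i))"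
    by (rule sum_mono)
  also have "\<dots> = - sum_sq v + \<tau> * quad_form A v"
    unfolding sum_sq_def quad_form_def by (simp add: sum_subtractf sum_distrib_left)
  also have "\<dots> \<le> - sum_sq v + \<tau> * (lambda1 A * sum_sq v)"
    using quad_form_le_lambda1[OF adj] tau by (simp add: mult_left_mono)
  finally have "(\<Sum>i\<in>UNIV. v i * nimfa_rhs A \<tau> v i) \<le> - sum_sq v + \<tau> * (lambda1 A * sum_sq v)" .
  moreover have "(\<Sum>i\<in>UNIV. 2 * v i * nimfa_rhs A \<tau> v i) = 2 * (\<Sum>i\<in>UNIV. v i * nimfa_rhs A \<tau> v i)"
    by (simp add: sum_distrib_left mult.assoc)
  ultimately show ?thesis unfolding R0_def by (simp add: algebra_simps)
qed

lemma nimfa_prevalence_exp_bound: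
  fixes A :: "'n::finite \<Rightarrow> 'n \<Rightarrow> real"
  assumes adj: "adjacency_matrix A" and tau: "\<tau> \<ge> 0"
    and V: "nimfa_solution A \<tau> V" and V0: "V 0 = (\<lambda>i. r)" and r: "0 \<le> r" "r \<le> 1" and t: "0 \<le> t"
  shows "prevalence (V t) \<le> r * exp ((R0 A \<tau> - 1) * t)"
proof -
  define c where "c = R0 A \<tau> - 1"
  have V_cube: "0 \<le> V s i \<and> V s i \<le> 1" if "0 \<le> s" for s i
    by (rule nimfa_solution_in_unit_cube[OF adj tau V]) (use V0 r that in auto)
  let ?\<phi> = "\<lambda>s. sum_sq (V s) - real CARD('n) * r\<^sup>2 * exp (2 * c * s)"
  have "?\<phi> t \<le> 0"
  proof (rule gronwall_nonpos[where C="2 * c" and T=t and \<phi>="?\<phi>"])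
    fix s :: real assume s: "0 \<le> s" "s \<le> t"
    show "(?\<phi> has_real_derivative (\<Sum>i\<in>UNIV. 2 * V s i * nimfa_rhs A \<tau> (V s) i)
        - real CARD('n) * r\<^sup>2 * (exp (2 * c * s) * (2 * c))) (at s within {0..})"
      unfolding sum_sq_def
    proof (intro DERIV_diff DERIV_sum DERIV_cmult)
      fix i :: 'n
      from DERIV_pow[THEN DERIV_chain2, OF nimfa_solutionD[OF V s(1), of i], of 2]
      show "((\<lambda>s. (V s i)\<^sup>2) has_real_derivative 2 * V s i * nimfa_rhs A \<tau> (V s) i) (at s within {0..})"
        by simp
      show "((\<lambda>s. exp (2 * c * s)) has_real_derivative exp (2 * c * s) * (2 * c)) (at s within {0..})"
        by (auto intro!: derivative_eq_intros)
    qed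
    have "(\<Sum>i\<in>UNIV. 2 * V s i * nimfa_rhs A \<tau> (V s) i) \<le> 2 * c * sum_sq (V s)"
      unfolding c_def by (rule nimfa_rhs_energy_le[OF adj tau]) (use V_cube s in auto)
    then show "(\<Sum>i\<in>UNIV. 2 * V s i * nimfa_rhs A \<tau> (V s) i)
        - real CARD('n) * r\<^sup>2 * (exp (2 * c * s) * (2 * c)) \<le> 2 * c * ?\<phi> s"
      by (simp add: algebra_simps)
  qed (use V0 t in \<open>auto simp: sum_sq_def\<close>)
  then have norm_bound: "sum_sq (V t) \<le> real CARD('n) * r\<^sup>2 * exp (2 * c * t)" by simp
  have "(\<Sum>i\<in>UNIV. V t i)\<^sup>2 = (\<Sum>i\<in>UNIV. \<bar>V t i\<bar>)\<^sup>2" using V_cube[OF t] by simp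
  also have "\<dots> \<le> real CARD('n) * sum_sq (V t)" unfolding sum_sq_def by (rule sum_abs_squared_le)
  also have "\<dots> \<le> real CARD('n) * (real CARD('n) * r\<^sup>2 * exp (2 * c * t))"
    using norm_bound by (simp add: mult_left_mono)
  also have "\<dots> = (real CARD('n) * r * exp (c * t))\<^sup>2"
    by (simp add: power2_eq_square exp_add[symmetric] algebra_simps)
  finally have "(\<Sum>i\<in>UNIV. V t i) \<le> real CARD('n) * r * exp (c * t)"
    by (rule power2_le_imp_le) (use r in simp)
  then show ?thesis unfolding prevalence_def c_def[symmetric]
    by (simp add: divide_le_eq mult.commute mult.left_commute)
qed

lemma nimfa_prevalence_gap:
  fixes A :: "'n::finite \<Rightarrow> 'n \<Rightarrow> real"
  assumes adj: "adjacency_matrix A" and tau: "\<tau> \<ge> 0" and R: "R0 A \<tau> > 1"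
    and r: "0 < r" "r \<le> 1" "r < y"
    and V: "nimfa_solution A \<tau> V" and V0: "V 0 = (\<lambda>i. r)"
    and t: "0 \<le> t" "t < 1 / (R0 A \<tau> - 1) * ln ((y - r) / r)"
  shows "\<bar>prevalence (V t) - y\<bar> > r"
proof -
  have "(R0 A \<tau> - 1) * t < ln ((y - r) / r)"
    using t(2) R by (simp add: field_simps)
  then have "exp ((R0 A \<tau> - 1) * t) < (y - r) / r"
    using r by (metis exp_less_cancel_iff exp_ln divide_pos_pos diff_gt_0_iff_gt)
  then have "r * exp ((R0 A \<tau> - 1) * t) < y - r" using r by (simp add: field_simps)
  with nimfa_prevalence_exp_bound[OF adj tau V V0 _ r(2) t(1)] r show ?thesis by fastforce
qed

theorem mainTheorem4:
  fixes A :: "'n::finite \<Rightarrow> 'n \<Rightarrow> real" and \<tau> r :: real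
  assumes "adjacency_matrix A" and "connected_graph A"
    and "\<tau> > 0" and "R0 A \<tau> > 1"
    and "0 < r" and "r < y_inf A \<tau>"
  shows "(\<forall>V. nimfa_solution A \<tau> V \<and> V 0 = (\<lambda>i. r) \<longrightarrow>
            (\<forall>t. 0 \<le> t \<and> t < 1 / (R0 A \<tau> - 1) * ln ((y_inf A \<tau> - r) / r) \<longrightarrow>
                 \<bar>prevalence (V t) - y_inf A \<tau>\<bar> > r))
         \<and> upper_transition_time A \<tau> r \<ge> 1 / (R0 A \<tau> - 1) * ln ((y_inf A \<tau> - r) / r)"
proof -
  note adj = assms(1) and R = assms(4)
  have tau: "\<tau> \<ge> 0" using assms(3) by simp
  define T where "T = 1 / (R0 A \<tau> - 1) * ln ((y_inf A \<tau> - r) / r)"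
  define S where "S = {t. t \<ge> 0 \<and> (\<forall>V. nimfa_solution A \<tau> V \<and> (\<forall>i. r \<le> V 0 i \<and> V 0 i \<le> 1) \<longrightarrow>
     \<bar>prevalence (V t) - y_inf A \<tau>\<bar> \<le> r)}"
  have r1: "r \<le> 1" using y_inf_le_one[OF assms(1-4)] assms(6) by simp
  have gap: "\<bar>prevalence (V t) - y_inf A \<tau>\<bar> > r"
    if "nimfa_solution A \<tau> V" "V 0 = (\<lambda>i. r)" "0 \<le> t" "t < T" for V t
    using nimfa_prevalence_gap[OF adj tau R assms(5) r1 assms(6) that[unfolded T_def]] .
  have "T \<le> Inf S"
  proof (rule cInf_greatest)
    show "S \<noteq> {}" using nimfa_uniform_attraction[OF assms(1-5) assms(5)] unfolding S_def by blast
    fix s assume s: "s \<in> S"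
    obtain W where W: "nimfa_solution A \<tau> W" "W 0 = (\<lambda>i. r)"
      by (rule nimfa_solution_exists[OF adj tau, of "\<lambda>i. r"]) (use assms(5) r1 in auto)
    with s r1 have "\<bar>prevalence (W s) - y_inf A \<tau>\<bar> \<le> r" unfolding S_def by auto
    with gap[OF W] s show "T \<le> s" unfolding S_def by fastforce
  qed
  then show ?thesis using gap unfolding upper_transition_time_def S_def[symmetric] T_def[symmetric] by blast
qed

end
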